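(* $Q^*(\mathcal{G})=\mathrm{Free}(N)$, where $N$ is the set of the following eleven graphs: $\overline{C_3}$, $\overline{C_5}$, $\overline{C_7}$, and $G_1,\dots,G_8$ defined as follows. $G_1$: the join of a path $P_4$ and an edge $K_2$ (every vertex of the $P_4$ adjacent to both vertices of the $K_2$). $G_2$: the join of a cycle $C_4$ and an edge $K_2$. $G_3$: the join of $2K_2$ and an edge $K_2$. $G_4$: a clique on vertices $a,b,c,d$ together with two non-adjacent vertices $e,f$, where $e$ is adjacent exactly to $b,c$ and $f$ is adjacent exactly to $a,d$. $G_{5+k}$ for $k\in\{0,1,2,3\}$: vertices $x,p_1,p_2,p_3,y,q_1,q_2,q_3$, where $\{x,p_1,p_2,p_3\}$ and $\{y,q_1,q_2,q_3\}$ are cliques, $x$ is adjacent to $q_1,q_2,q_3$, $y$ is adjacent to $p_1,p_2,p_3$, $x$ is not adjacent to $y$, and among pairs $p_iq_j$ exactly the pairs $p_iq_i$ with $i\le k$ are edges.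
   Context: All graphs are finite, simple and undirected; $\mathcal{G}$ denotes the class of all such graphs. $\overline{H}$ is the complement of $H$, $C_n$ the chordless cycle and $P_n$ the chordless path on $n$ vertices, $2K_2$ the disjoint union of two edges. For a set of graphs $M$, $\mathrm{Free}(M)$ is the class of graphs containing no induced subgraph isomorphic to a member of $M$. For a graph $G=(V,E)$, $Q(G)$ is the graph with vertex set $V\cup E$ in which $V$ is a clique, $E$ is a clique, and $v\in V$ is adjacent to $e\in E$ iff $v$ is an endpoint of $e$ in $G$; $Q^*(\mathcal{G})$ is the class of all graphs isomorphic to induced subgraphs of graphs $Q(G)$, $G\in\mathcal{G}$. *)

theory Defs
  imports Main
begin

type_synonym 'a graph = "'a set \<times> ('a \<Rightarrow> 'a \<Rightarrow> bool)"

definition verts :: "'a graph \<Rightarrow> 'a set" where "verts G = fst G"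
definition adj :: "'a graph \<Rightarrow> 'a \<Rightarrow> 'a \<Rightarrow> bool" where "adj G = snd G"

definition simple_graph :: "'a graph \<Rightarrow> bool" where
  "simple_graph G \<longleftrightarrow> finite (verts G)
     \<and> (\<forall>x y. adj G x y \<longrightarrow> x \<in> verts G \<and> y \<in> verts G)
     \<and> (\<forall>x y. adj G x y \<longrightarrow> adj G y x)
     \<and> (\<forall>x. \<not> adj G x x)"

definition induced_embeds :: "'b graph \<Rightarrow> 'a graph \<Rightarrow> bool" where
  "induced_embeds H G \<longleftrightarrow> (\<exists>f. inj_on f (verts H) \<and> f ` verts H \<subseteq> verts G
     \<and> (\<forall>x\<in>verts H. \<forall>y\<in>verts H. adj G (f x) (f y) \<longleftrightarrow> adj H x y))"

text \<open>Q(G): vertices of G (Inl) and edges of G as 2-sets (Inr); both cliques;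
  v adjacent to e iff v is an endpoint of e.\<close>
definition Qedges :: "'a graph \<Rightarrow> 'a set set" where
  "Qedges G = {{u, v} | u v. adj G u v}"

definition Qgraph :: "'a graph \<Rightarrow> ('a + 'a set) graph" where
  "Qgraph G = (Inl ` verts G \<union> Inr ` Qedges G,
     \<lambda>a b. a \<noteq> b \<and> a \<in> Inl ` verts G \<union> Inr ` Qedges G
           \<and> b \<in> Inl ` verts G \<union> Inr ` Qedges G
           \<and> (case (a, b) of
                (Inl _, Inl _) \<Rightarrow> True
              | (Inr _, Inr _) \<Rightarrow> True
              | (Inl v, Inr e) \<Rightarrow> v \<in> e
              | (Inr e, Inl v) \<Rightarrow> v \<in> e))"

text \<open>Membership in Q*(G): isomorphic to an induced subgraph of Q(G) for some finite
  simple graph G (taken w.l.o.g. with vertices in nat).\<close>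
definition in_Qstar :: "'a graph \<Rightarrow> bool" where
  "in_Qstar H \<longleftrightarrow> (\<exists>G :: nat graph. simple_graph G \<and> induced_embeds H (Qgraph G))"

definition Free :: "nat graph set \<Rightarrow> 'a graph \<Rightarrow> bool" where
  "Free M H \<longleftrightarrow> (\<forall>F\<in>M. \<not> induced_embeds F H)"

definition mk_graph :: "nat \<Rightarrow> (nat \<Rightarrow> nat \<Rightarrow> bool) \<Rightarrow> nat graph" where
  "mk_graph n P = ({0..<n}, \<lambda>x y. x < n \<and> y < n \<and> x \<noteq> y \<and> (P x y \<or> P y x))"

text \<open>Complement of the chordless cycle C_n (vertices 0..n-1 in cyclic order).\<close>
definition co_cycle :: "nat \<Rightarrow> nat graph" where
  "co_cycle n = mk_graph n (\<lambda>x y. y \<noteq> (x + 1) mod n \<and> x \<noteq> (y + 1) mod n)"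

text \<open>Join of a graph on {0..<n} (given by P) with an edge K2 on {n, n+1}.\<close>
definition join_K2 :: "nat \<Rightarrow> (nat \<Rightarrow> nat \<Rightarrow> bool) \<Rightarrow> nat graph" where
  "join_K2 n P = mk_graph (n + 2)
     (\<lambda>x y. (x < n \<and> y < n \<and> P x y) \<or> (x < n \<and> y \<ge> n) \<or> (x = n \<and> y = n + 1))"

definition G1 :: "nat graph" where "G1 = join_K2 4 (\<lambda>x y. y = x + 1)"
definition G2 :: "nat graph" where "G2 = join_K2 4 (\<lambda>x y. y = x + 1 \<or> (x = 0 \<and> y = 3))"
definition G3 :: "nat graph" where "G3 = join_K2 4 (\<lambda>x y. (x = 0 \<and> y = 1) \<or> (x = 2 \<and> y = 3))"

text \<open>a,b,c,d = 0,1,2,3; e = 4; f = 5.\<close>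
definition G4 :: "nat graph" where
  "G4 = mk_graph 6 (\<lambda>x y. (x < 4 \<and> y < 4) \<or> (x = 4 \<and> (y = 1 \<or> y = 2))
                         \<or> (x = 5 \<and> (y = 0 \<or> y = 3)))"

text \<open>G_{5+k}: x = 0, p_i = i, y = 4, q_i = i + 4.\<close>
definition G5k :: "nat \<Rightarrow> nat graph" where
  "G5k k = mk_graph 8 (\<lambda>x y. (x < 4 \<and> y < 4) \<or> (x \<ge> 4 \<and> y \<ge> 4)
      \<or> (x = 0 \<and> y \<ge> 5) \<or> (y = 4 \<and> 1 \<le> x \<and> x \<le> 3)
      \<or> (1 \<le> x \<and> x \<le> k \<and> y = x + 4))"

definition N_graphs :: "nat graph set" where
  "N_graphs = {co_cycle 3, co_cycle 5, co_cycle 7, G1, G2, G3, G4,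
               G5k 0, G5k 1, G5k 2, G5k 3}"

end

theory Submission
  imports Defs
begin

text \<open>In \<open>Q(G)\<close> the vertices and the edges of \<open>G\<close> form two cliques, and an edge-vertex is
  adjacent to exactly its two endpoints. Hence \<open>H \<in> Q*(\<G>)\<close> iff \<open>H\<close> has a Q-partition: a
  set \<open>A\<close> such that \<open>A\<close> and its complement are cliques, every vertex outside \<open>A\<close> has at most two
  neighbours in \<open>A\<close>, and no two vertices outside \<open>A\<close> have two common neighbours in \<open>A\<close>
  (conversely, read \<open>A\<close> as vertex set and pad the missing endpoints by fresh vertices).
  Q-partitions are inherited by induced subgraphs and none of the eleven graphs of \<open>N\<close> has one.

  For the converse we work in the complement of \<open>H\<close>. A shortest odd cycle of the complement is
  chordless; of length 3, 5 or 7 it yields an induced complement of \<open>C\<^sub>3\<close>, \<open>C\<^sub>5\<close>, \<open>C\<^sub>7\<close>, and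
  of length at least 9 an induced \<open>G\<^sub>1\<close>. So the complement is bipartite. If no
  co-component contains two disjoint co-edges, all co-components are stars and their centres form
  a Q-partition. Otherwise \<open>G\<^sub>1\<close>, \<open>G\<^sub>2\<close>, \<open>G\<^sub>3\<close> leave room beside that co-component for at most
  an isolated vertex or a single co-edge, and the excluded configurations \<open>G\<^sub>4\<close>, \<dots>, \<open>G\<^sub>8\<close> show
  that one colour class, adjusted at these few extra vertices, is a Q-partition.\<close>

section \<open>Complement adjacency and induced embeddings\<close>

definition coadj :: "'a graph \<Rightarrow> 'a \<Rightarrow> 'a \<Rightarrow> bool" where
  "coadj H x y \<longleftrightarrow> x \<in> verts H \<and> y \<in> verts H \<and> x \<noteq> y \<and> \<not> adj H x y"

lemma coadj_in_verts: "coadj H x y \<Longrightarrow> x \<in> verts H" "coadj H x y \<Longrightarrow> y \<in> verts H"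
  and coadj_neq: "coadj H x y \<Longrightarrow> x \<noteq> y"
  by (simp_all add: coadj_def)

lemma coadj_irrefl: "\<not> coadj H x x"
  by (simp add: coadj_def)

lemma adj_iff_not_coadj: "x \<in> verts H \<Longrightarrow> y \<in> verts H \<Longrightarrow> x \<noteq> y \<Longrightarrow> adj H x y \<longleftrightarrow> \<not> coadj H x y"
  by (simp add: coadj_def)

lemma simple_graph_adj_sym: "simple_graph H \<Longrightarrow> adj H x y \<Longrightarrow> adj H y x"
  and simple_graph_adj_in_verts: "simple_graph H \<Longrightarrow> adj H x y \<Longrightarrow> x \<in> verts H \<and> y \<in> verts H"
  and simple_graph_adj_irrefl: "simple_graph H \<Longrightarrow> \<not> adj H x x"
  by (simp_all add: simple_graph_def)

lemma coadj_commute: "simple_graph H \<Longrightarrow> coadj H x y \<longleftrightarrow> coadj H y x"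
  by (auto simp: coadj_def simple_graph_def)

lemma simple_graph_mk_graph: "simple_graph (mk_graph n P)"
  by (auto simp: simple_graph_def mk_graph_def verts_def adj_def)

lemma induced_embeds_mk_graphI:
  assumes H: "simple_graph H" and xs: "distinct xs" "set xs \<subseteq> verts H" "length xs = n"
    and adj: "\<And>i j. i < j \<Longrightarrow> j < n \<Longrightarrow> adj H (xs ! i) (xs ! j) \<longleftrightarrow> P i j \<or> P j i"
  shows "induced_embeds (mk_graph n P) H"
  unfolding induced_embeds_def
proof (intro exI[of _ "(!) xs"] conjI ballI)
  show "inj_on ((!) xs) (verts (mk_graph n P))"
    using xs by (simp add: inj_on_def nth_eq_iff_index_eq mk_graph_def verts_def)
  show "(!) xs ` verts (mk_graph n P) \<subseteq> verts H"
    using xs by (auto simp: mk_graph_def verts_def)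
  fix i j assume "i \<in> verts (mk_graph n P)" "j \<in> verts (mk_graph n P)"
  then have ij: "i < n" "j < n" by (simp_all add: mk_graph_def verts_def)
  consider "i < j" | "i = j" | "j < i" by arith
  then show "adj H (xs ! i) (xs ! j) \<longleftrightarrow> adj (mk_graph n P) i j"
  proof cases
    case 1 then show ?thesis using adj[of i j] ij by (auto simp: mk_graph_def adj_def)
  next
    case 2 then show ?thesis using simple_graph_adj_irrefl[OF H] by (simp add: mk_graph_def adj_def)
  next
    case 3 then show ?thesis
      using adj[of j i] ij simple_graph_adj_sym[OF H] by (auto simp: mk_graph_def adj_def)
  qed
qed

section \<open>Q-partitions\<close>

text \<open>Stated in the complement: the last two conditions say that a vertex outside \<open>A\<close> is
  adjacent to at most two vertices of \<open>A\<close>, and two vertices outside \<open>A\<close> have at most one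
  common neighbour in \<open>A\<close>.\<close>

definition Q_partition :: "'a graph \<Rightarrow> 'a set \<Rightarrow> bool" where
  "Q_partition H A \<longleftrightarrow> A \<subseteq> verts H
    \<and> (\<forall>x\<in>A. \<forall>y\<in>A. \<not> coadj H x y)
    \<and> (\<forall>x\<in>verts H - A. \<forall>y\<in>verts H - A. \<not> coadj H x y)
    \<and> (\<forall>b\<in>verts H - A. \<forall>a1\<in>A. \<forall>a2\<in>A. \<forall>a3\<in>A. a1 \<noteq> a2 \<and> a1 \<noteq> a3 \<and> a2 \<noteq> a3
          \<longrightarrow> coadj H b a1 \<or> coadj H b a2 \<or> coadj H b a3)
    \<and> (\<forall>b\<in>verts H - A. \<forall>b'\<in>verts H - A. \<forall>a\<in>A. \<forall>a'\<in>A. b \<noteq> b' \<and> a \<noteq> a'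
          \<longrightarrow> coadj H b a \<or> coadj H b a' \<or> coadj H b' a \<or> coadj H b' a')"

lemma Q_partitionD:
  assumes "Q_partition H A"
  shows Q_partition_subset: "A \<subseteq> verts H"
    and Q_partition_inside: "x \<in> A \<Longrightarrow> y \<in> A \<Longrightarrow> \<not> coadj H x y"
    and Q_partition_outside: "x \<in> verts H - A \<Longrightarrow> y \<in> verts H - A \<Longrightarrow> \<not> coadj H x y"
    and Q_partition_three: "b \<in> verts H - A \<Longrightarrow> a1 \<in> A \<Longrightarrow> a2 \<in> A \<Longrightarrow> a3 \<in> A
      \<Longrightarrow> distinct [a1, a2, a3] \<Longrightarrow> coadj H b a1 \<or> coadj H b a2 \<or> coadj H b a3"
    and Q_partition_two_two: "b \<in> verts H - A \<Longrightarrow> b' \<in> verts H - A \<Longrightarrow> a \<in> A \<Longrightarrow> a' \<in> A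
      \<Longrightarrow> b \<noteq> b' \<Longrightarrow> a \<noteq> a' \<Longrightarrow> coadj H b a \<or> coadj H b a' \<or> coadj H b' a \<or> coadj H b' a'"
  using assms by (auto simp: Q_partition_def)

lemma Q_partition_coadj:
  "Q_partition H A \<Longrightarrow> coadj H x y \<Longrightarrow> x \<in> A \<longleftrightarrow> y \<notin> A"
  by (meson DiffI Q_partition_inside Q_partition_outside coadj_in_verts)

lemma Q_partition_three_nbrs:
  assumes H: "simple_graph H" and A: "Q_partition H A"
    and adj: "adj H b a1" "adj H b a2" "adj H b a3" and ne: "distinct [a1, a2, a3]"
  shows "\<not> (b \<notin> A \<and> a1 \<in> A \<and> a2 \<in> A \<and> a3 \<in> A)"
proof
  assume mem: "b \<notin> A \<and> a1 \<in> A \<and> a2 \<in> A \<and> a3 \<in> A"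
  have "b \<in> verts H" using adj(1) simple_graph_adj_in_verts[OF H] by blast
  then have "coadj H b a1 \<or> coadj H b a2 \<or> coadj H b a3"
    using Q_partition_three[OF A _ _ _ _ ne] mem by blast
  then show False using adj by (auto simp: coadj_def)
qed

lemma Q_partition_two_common_nbrs:
  assumes H: "simple_graph H" and A: "Q_partition H A"
    and adj: "adj H b a" "adj H b a'" "adj H b' a" "adj H b' a'" and ne: "b \<noteq> b'" "a \<noteq> a'"
  shows "\<not> (b \<notin> A \<and> b' \<notin> A \<and> a \<in> A \<and> a' \<in> A)"
proof
  assume mem: "b \<notin> A \<and> b' \<notin> A \<and> a \<in> A \<and> a' \<in> A"
  have "b \<in> verts H" "b' \<in> verts H"
    using adj(1,3) simple_graph_adj_in_verts[OF H] by blast+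
  then have "coadj H b a \<or> coadj H b a' \<or> coadj H b' a \<or> coadj H b' a'"
    using Q_partition_two_two[OF A _ _ _ _ ne] mem by blast
  then show False using adj by (auto simp: coadj_def)
qed

lemma Q_partition_induced:
  assumes emb: "induced_embeds F H" and A: "Q_partition H A"
  shows "\<exists>A'. Q_partition F A'"
proof -
  obtain f where f: "inj_on f (verts F)" "f ` verts F \<subseteq> verts H"
    "\<forall>x\<in>verts F. \<forall>y\<in>verts F. adj H (f x) (f y) \<longleftrightarrow> adj F x y"
    using emb unfolding induced_embeds_def by blast
  have coadj_f: "coadj H (f x) (f y) \<longleftrightarrow> coadj F x y" if "x \<in> verts F" "y \<in> verts F" for x y
    using that f by (auto simp: coadj_def inj_on_eq_iff)
  have fV: "f x \<in> verts H" if "x \<in> verts F" for x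
    using that f(2) by blast
  have ne: "f x \<noteq> f y" if "x \<in> verts F" "y \<in> verts F" "x \<noteq> y" for x y
    using that f(1) by (meson inj_onD)
  let ?A' = "{x \<in> verts F. f x \<in> A}"
  have "Q_partition F ?A'"
    unfolding Q_partition_def
  proof (intro conjI ballI impI)
    fix x y assume "x \<in> ?A'" "y \<in> ?A'"
    then show "\<not> coadj F x y" using Q_partition_inside[OF A] coadj_f by auto
  next
    fix x y assume "x \<in> verts F - ?A'" "y \<in> verts F - ?A'"
    then have "\<not> coadj H (f x) (f y)" using Q_partition_outside[OF A] fV by simp
    then show "\<not> coadj F x y" using coadj_f \<open>x \<in> verts F - ?A'\<close> \<open>y \<in> verts F - ?A'\<close> by simp
  next
    fix b a1 a2 a3 assume "b \<in> verts F - ?A'" "a1 \<in> ?A'" "a2 \<in> ?A'" "a3 \<in> ?A'"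
      "a1 \<noteq> a2 \<and> a1 \<noteq> a3 \<and> a2 \<noteq> a3"
    then show "coadj F b a1 \<or> coadj F b a2 \<or> coadj F b a3"
      using Q_partition_three[OF A, of "f b" "f a1" "f a2" "f a3"] coadj_f fV ne by auto
  next
    fix b b' a a' assume "b \<in> verts F - ?A'" "b' \<in> verts F - ?A'" "a \<in> ?A'" "a' \<in> ?A'"
      "b \<noteq> b' \<and> a \<noteq> a'"
    then show "coadj F b a \<or> coadj F b a' \<or> coadj F b' a \<or> coadj F b' a'"
      using Q_partition_two_two[OF A, of "f b" "f b'" "f a" "f a'"] coadj_f fV ne by auto
  qed blast
  then show ?thesis ..
qed

lemma verts_Qgraph: "verts (Qgraph G) = Inl ` verts G \<union> Inr ` Qedges G"
  by (simp add: Qgraph_def verts_def)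

lemma coadj_Qgraph_Inr_Inl:
  "coadj (Qgraph G) (Inr e) (Inl v) \<longleftrightarrow> e \<in> Qedges G \<and> v \<in> verts G \<and> v \<notin> e"
  by (auto simp: coadj_def Qgraph_def verts_def adj_def)

lemma not_coadj_Qgraph_same_side:
  "\<not> coadj (Qgraph G) (Inl u) (Inl v)" "\<not> coadj (Qgraph G) (Inr e) (Inr e')"
  by (auto simp: coadj_def Qgraph_def verts_def adj_def)

lemma Qedges_doubleton: "e \<in> Qedges G \<Longrightarrow> \<exists>u w. e = {u, w}"
  by (auto simp: Qedges_def)

lemma Q_partition_Qgraph: "Q_partition (Qgraph G) (Inl ` verts G)"
  unfolding Q_partition_def
proof (intro conjI ballI impI)
  let ?A = "Inl ` verts G :: ('a + 'a set) set"
  have outside: "x \<in> Inr ` Qedges G" if "x \<in> verts (Qgraph G) - ?A" for x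
    using that by (auto simp: verts_Qgraph)
  show "?A \<subseteq> verts (Qgraph G)" by (simp add: verts_Qgraph)
  show "\<not> coadj (Qgraph G) x y" if "x \<in> ?A" "y \<in> ?A" for x y
    using that by (auto simp: not_coadj_Qgraph_same_side)
  show "\<not> coadj (Qgraph G) x y" if "x \<in> verts (Qgraph G) - ?A" "y \<in> verts (Qgraph G) - ?A" for x y
    using outside[OF that(1)] outside[OF that(2)] by (auto simp: not_coadj_Qgraph_same_side)
next
  fix b a1 a2 a3 :: "'a + 'a set" assume b: "b \<in> verts (Qgraph G) - Inl ` verts G"
    and a: "a1 \<in> Inl ` verts G" "a2 \<in> Inl ` verts G" "a3 \<in> Inl ` verts G"
    and ne: "a1 \<noteq> a2 \<and> a1 \<noteq> a3 \<and> a2 \<noteq> a3"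
  obtain e where e: "b = Inr e" "e \<in> Qedges G" using b by (auto simp: verts_Qgraph)
  obtain u w where "e = {u, w}" using Qedges_doubleton[OF e(2)] by blast
  then show "coadj (Qgraph G) b a1 \<or> coadj (Qgraph G) b a2 \<or> coadj (Qgraph G) b a3"
    using a ne e by (auto simp: coadj_Qgraph_Inr_Inl)
next
  fix b b' a a' :: "'a + 'a set" assume b: "b \<in> verts (Qgraph G) - Inl ` verts G"
    "b' \<in> verts (Qgraph G) - Inl ` verts G"
    and a: "a \<in> Inl ` verts G" "a' \<in> Inl ` verts G" and ne: "b \<noteq> b' \<and> a \<noteq> a'"
  obtain e where e: "b = Inr e" "e \<in> Qedges G" using b(1) by (auto simp: verts_Qgraph)
  obtain e' where e': "b' = Inr e'" "e' \<in> Qedges G" using b(2) by (auto simp: verts_Qgraph)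
  obtain u w where "e = {u, w}" using Qedges_doubleton[OF e(2)] by blast
  moreover obtain u' w' where "e' = {u', w'}" using Qedges_doubleton[OF e'(2)] by blast
  ultimately show
    "coadj (Qgraph G) b a \<or> coadj (Qgraph G) b a' \<or> coadj (Qgraph G) b' a \<or> coadj (Qgraph G) b' a'"
    using a ne e e' by (auto simp: coadj_Qgraph_Inr_Inl doubleton_eq_iff)
qed

lemma in_Qstar_imp_Q_partition: "in_Qstar H \<Longrightarrow> \<exists>A. Q_partition H A"
  unfolding in_Qstar_def using Q_partition_induced Q_partition_Qgraph by blast

lemma Q_partition_card_nbrs:
  assumes H: "simple_graph H" and A: "Q_partition H A" and b: "b \<in> verts H - A"
  shows "card {a \<in> A. adj H b a} \<le> 2"
proof (rule ccontr)
  assume "\<not> ?thesis"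
  then have "3 \<le> card {a \<in> A. adj H b a}" by simp
  then obtain T where T: "T \<subseteq> {a \<in> A. adj H b a}" "card T = 3"
    by (rule obtain_subset_with_card_n)
  then obtain a1 a2 a3 where "T = {a1, a2, a3}" "distinct [a1, a2, a3]"
    by (auto simp: card_3_iff)
  then have "coadj H b a1 \<or> coadj H b a2 \<or> coadj H b a3" "adj H b a1" "adj H b a2" "adj H b a3"
    using Q_partition_three[OF A b] T(1) by auto
  then show False by (auto simp: coadj_def)
qed

lemma Q_partition_card_common_nbrs:
  assumes H: "simple_graph H" and A: "Q_partition H A"
    and b: "b \<in> verts H - A" "b' \<in> verts H - A" "b \<noteq> b'"
  shows "card ({a \<in> A. adj H b a} \<inter> {a \<in> A. adj H b' a}) \<le> 1"
proof (rule ccontr)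
  assume "\<not> ?thesis"
  then have "2 \<le> card ({a \<in> A. adj H b a} \<inter> {a \<in> A. adj H b' a})" by simp
  then obtain T where T: "T \<subseteq> {a \<in> A. adj H b a} \<inter> {a \<in> A. adj H b' a}" "card T = 2"
    by (rule obtain_subset_with_card_n)
  then obtain a a' where "T = {a, a'}" "a \<noteq> a'"
    by (auto simp: card_2_iff)
  then have "coadj H b a \<or> coadj H b a' \<or> coadj H b' a \<or> coadj H b' a'"
    "adj H b a" "adj H b a'" "adj H b' a" "adj H b' a'"
    using Q_partition_two_two[OF A b(1,2)] T(1) b(3) by auto
  then show False by (auto simp: coadj_def)
qed

text \<open>Old vertices are numbered below \<open>M\<close>; the fresh vertices \<open>M + 2k\<close> and \<open>M + 2k + 1\<close> are
  private to \<open>k\<close> and pad a set of at most two old vertices to an edge.\<close>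

definition pad_edge :: "nat \<Rightarrow> nat \<Rightarrow> nat set \<Rightarrow> nat set" where
  "pad_edge M k S = (if card S = 2 then S else if card S = 1 then insert (M + 2 * k) S
     else {M + 2 * k, M + 2 * k + 1})"

lemma pad_edge_subset: "pad_edge M k S \<subseteq> S \<union> {M + 2 * k, M + 2 * k + 1}"
  by (auto simp: pad_edge_def)

lemma pad_edge_doubleton:
  assumes "S \<subseteq> {..<M}" "card S \<le> 2"
  shows "\<exists>u v. u \<noteq> v \<and> pad_edge M k S = {u, v}"
proof -
  have "finite S" using assms(1) finite_subset by blast
  moreover have "card S = 0 \<or> card S = 1 \<or> card S = 2" using assms(2) by arith
  ultimately consider "S = {}" | "card S = 1" | "card S = 2" by auto
  then show ?thesis
  proof cases
    case 1
    then show ?thesis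
      by (intro exI[of _ "M + 2 * k"] exI[of _ "M + 2 * k + 1"]) (simp add: pad_edge_def)
  next
    case 2
    then obtain u where u: "S = {u}" by (auto simp: card_Suc_eq)
    then have "M + 2 * k \<noteq> u" using assms(1) by auto
    then show ?thesis using u by (intro exI[of _ "M + 2 * k"] exI[of _ u]) (simp add: pad_edge_def)
  next
    case 3
    then obtain u v where "u \<noteq> v" "S = {u, v}" by (auto simp: card_2_iff)
    then show ?thesis using 3 by (intro exI[of _ u] exI[of _ v]) (simp add: pad_edge_def)
  qed
qed

lemma pad_edge_old_iff:
  assumes S: "S \<subseteq> {..<M}" "card S \<le> 2" and x: "x < M"
  shows "x \<in> pad_edge M k S \<longleftrightarrow> x \<in> S"
proof -
  have "finite S" using S(1) finite_subset by blast
  moreover have "card S = 0 \<or> card S = 1 \<or> card S = 2" using S(2) by arith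
  ultimately consider "S = {}" | "card S = 1" | "card S = 2" by auto
  then show ?thesis
    by cases (use x in \<open>simp_all add: pad_edge_def\<close>)
qed

lemma pad_edge_eqD:
  assumes S: "S \<subseteq> {..<M}" "card S \<le> 2" and S': "S' \<subseteq> {..<M}" "card S' \<le> 2"
    and eq: "pad_edge M k S = pad_edge M k' S'"
  shows "k = k' \<or> (S = S' \<and> card S = 2)"
proof (cases "card S = 2")
  case True
  show ?thesis
  proof (cases "card S' = 2")
    case False
    then have "M + 2 * k' \<in> pad_edge M k' S'" by (auto simp: pad_edge_def)
    then show ?thesis using eq True S(1) by (auto simp: pad_edge_def)
  qed (use True eq in \<open>simp add: pad_edge_def\<close>)
next
  case False
  then have "M + 2 * k \<in> pad_edge M k S" by (simp add: pad_edge_def)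
  then have "M + 2 * k \<in> S' \<union> {M + 2 * k', M + 2 * k' + 1}" using eq pad_edge_subset by blast
  moreover have "M + 2 * k \<notin> S'" using S'(1) by auto
  ultimately have "M + 2 * k = M + 2 * k' \<or> M + 2 * k = M + 2 * k' + 1" by blast
  then have "k = k'" by presburger
  then show ?thesis ..
qed

lemma Q_partition_imp_in_Qstar:
  assumes H: "simple_graph H" and A: "Q_partition H A"
  shows "in_Qstar H"
proof -
  let ?V = "verts H" and ?B = "verts H - A"
  have finV: "finite ?V" using H by (simp add: simple_graph_def)
  obtain g :: "'a \<Rightarrow> nat" and M where gM: "g ` ?V = {i. i < M}" and g: "inj_on g ?V"
    using finite_imp_inj_to_nat_seg[OF finV] by blast
  have AV: "A \<subseteq> ?V" by (rule Q_partition_subset[OF A])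
  define nbrs where "nbrs b = {a \<in> A. adj H b a}" for b
  define edge where "edge b = pad_edge M (g b) (g ` nbrs b)" for b
  have nbrsV: "nbrs b \<subseteq> ?V" for b using AV by (auto simp: nbrs_def)
  have old: "g ` nbrs b \<subseteq> {..<M}" for b using gM nbrsV by blast
  have card_g_nbrs: "card (g ` nbrs b) = card (nbrs b)" for b
    using card_image inj_on_subset[OF g nbrsV] by blast
  have card_old: "card (g ` nbrs b) \<le> 2" if "b \<in> ?B" for b
    using Q_partition_card_nbrs[OF H A that] card_g_nbrs by (simp add: nbrs_def)
  have edge_doubleton: "\<exists>u v. u \<noteq> v \<and> edge b = {u, v}" if "b \<in> ?B" for b
    using pad_edge_doubleton[OF old card_old[OF that]] by (simp add: edge_def)
  have g_in_edge: "g a \<in> edge b \<longleftrightarrow> adj H b a" if "a \<in> A" "b \<in> ?B" for a b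
  proof -
    have "g a < M" using gM AV that(1) by auto
    then have "g a \<in> edge b \<longleftrightarrow> g a \<in> g ` nbrs b"
      using pad_edge_old_iff[OF old card_old[OF that(2)]] by (simp add: edge_def)
    also have "\<dots> \<longleftrightarrow> a \<in> nbrs b"
      using inj_on_image_mem_iff[OF g _ nbrsV] AV that(1) by blast
    finally show ?thesis using that(1) by (simp add: nbrs_def)
  qed
  have edge_inj: "inj_on edge ?B"
  proof (rule inj_onI)
    fix b b' assume b: "b \<in> ?B" "b' \<in> ?B" and eq: "edge b = edge b'"
    from pad_edge_eqD[OF old card_old[OF b(1)] old card_old[OF b(2)] eq[unfolded edge_def]]
    consider "g b = g b'" | "g ` nbrs b = g ` nbrs b'" "card (g ` nbrs b) = 2" by blast
    then show "b = b'"
    proof cases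
      case 1 then show ?thesis using g b by (auto dest: inj_onD)
    next
      case 2
      then have "nbrs b = nbrs b'" "card (nbrs b) = 2"
        using inj_on_image_eq_iff[OF g nbrsV nbrsV] card_g_nbrs by auto
      then show ?thesis
        using Q_partition_card_common_nbrs[OF H A b] by (fastforce simp: nbrs_def)
    qed
  qed
  define G :: "nat graph" where
    "G = (g ` A \<union> \<Union> (edge ` ?B), \<lambda>u v. u \<noteq> v \<and> (\<exists>b\<in>?B. edge b = {u, v}))"
  have "simple_graph G"
  proof -
    have "finite (edge b)" if "b \<in> ?B" for b using edge_doubleton[OF that] by auto
    then show ?thesis
      using finV finite_subset[OF AV finV] by (auto simp: simple_graph_def G_def verts_def adj_def)
  qed
  have edge_Qedges: "edge b \<in> Qedges G" if "b \<in> ?B" for b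
    using edge_doubleton[OF that] that by (auto simp: Qedges_def G_def adj_def)
  have g_verts: "g a \<in> verts G" if "a \<in> A" for a
    using that by (simp add: G_def verts_def)
  define f where "f x = (if x \<in> A then Inl (g x) else Inr (edge x))" for x
  have fQ: "f x \<in> verts (Qgraph G)" if "x \<in> ?V" for x
    using that g_verts edge_Qedges by (auto simp: f_def verts_Qgraph)
  have "induced_embeds H (Qgraph G)"
    unfolding induced_embeds_def
  proof (intro exI[of _ f] conjI ballI)
    show "inj_on f ?V"
      using g edge_inj by (auto simp: inj_on_def f_def)
    show "f ` ?V \<subseteq> verts (Qgraph G)" using fQ by blast
    fix x y assume x: "x \<in> ?V" and y: "y \<in> ?V"
    have Qadj: "adj (Qgraph G) (f x) (f y) \<longleftrightarrow> f x \<noteq> f y \<and> (case (f x, f y) of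
        (Inl _, Inl _) \<Rightarrow> True | (Inr _, Inr _) \<Rightarrow> True
      | (Inl v, Inr e) \<Rightarrow> v \<in> e | (Inr e, Inl v) \<Rightarrow> v \<in> e)"
      using fQ[OF x] fQ[OF y] by (simp add: Qgraph_def adj_def verts_def)
    have f_eq: "f x = f y \<longleftrightarrow> x = y"
      using g edge_inj x y by (auto simp: f_def inj_on_def)
    have same_side: "adj H x y \<longleftrightarrow> x \<noteq> y" if "x \<in> A \<longleftrightarrow> y \<in> A"
    proof -
      have "\<not> coadj H x y"
        using that x y Q_partition_inside[OF A] Q_partition_outside[OF A] by auto
      then show ?thesis
        using x y adj_iff_not_coadj simple_graph_adj_irrefl[OF H] by metis
    qed
    show "adj (Qgraph G) (f x) (f y) \<longleftrightarrow> adj H x y"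
    proof (cases "x \<in> A \<longleftrightarrow> y \<in> A")
      case True
      then show ?thesis using Qadj f_eq same_side by (auto simp: f_def)
    next
      case False
      then show ?thesis
        using Qadj x y g_in_edge g_in_edge simple_graph_adj_sym[OF H] by (auto simp: f_def)
    qed
  qed
  with \<open>simple_graph G\<close> show ?thesis unfolding in_Qstar_def by blast
qed

section \<open>The graphs of \<open>N\<close> have no Q-partition\<close>

lemma adj_co_cycle: "i < j \<Longrightarrow> j < n \<Longrightarrow> adj (co_cycle n) i j \<longleftrightarrow> \<not> (j = Suc i \<or> (i = 0 \<and> j = n - 1))"
  by (cases "Suc j = n") (auto simp: co_cycle_def mk_graph_def adj_def)

lemma coadj_co_cycle_Suc: "Suc i < n \<Longrightarrow> coadj (co_cycle n) i (Suc i)"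
  by (simp add: coadj_def co_cycle_def mk_graph_def verts_def adj_def)

lemma coadj_co_cycle_last: "2 \<le> n \<Longrightarrow> coadj (co_cycle n) 0 (n - 1)"
  by (simp add: coadj_def co_cycle_def mk_graph_def verts_def adj_def)

lemma co_cycle_no_Q_partition:
  assumes "odd n" "3 \<le> n"
  shows "\<not> Q_partition (co_cycle n) A"
proof
  assume A: "Q_partition (co_cycle n) A"
  have alternate: "i \<in> A \<longleftrightarrow> (0 \<in> A \<longleftrightarrow> even i)" if "i < n" for i
    using that by (induction i) (auto dest: Q_partition_coadj[OF A coadj_co_cycle_Suc])
  have "n - 1 \<in> A \<longleftrightarrow> 0 \<in> A" using alternate[of "n - 1"] assms by simp
  then show False using Q_partition_coadj[OF A coadj_co_cycle_last] assms(2) by simp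
qed

lemma G1_no_Q_partition: "\<not> Q_partition G1 A"
proof
  assume A: "Q_partition G1 A"
  have G: "simple_graph (G1)" by (simp add: G1_def join_K2_def simple_graph_mk_graph)
  note three = Q_partition_three_nbrs[OF G A] and two = Q_partition_two_common_nbrs[OF G A]
  show False
    using Q_partition_coadj[OF A, of 0 2] Q_partition_coadj[OF A, of 0 3]
       Q_partition_coadj[OF A, of 1 3] three[of 1 2 4 5] three[of 2 1 4 5] three[of 4 0 1 5]
       three[of 4 2 3 5] three[of 5 0 1 4] three[of 5 2 3 4] two[of 4 0 1 5] two[of 4 2 3 5]
    by (simp add: G1_def join_K2_def mk_graph_def coadj_def verts_def adj_def; argo)
qed

lemma G2_no_Q_partition: "\<not> Q_partition G2 A"
proof
  assume A: "Q_partition G2 A"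
  have G: "simple_graph (G2)" by (simp add: G2_def join_K2_def simple_graph_mk_graph)
  note three = Q_partition_three_nbrs[OF G A] and two = Q_partition_two_common_nbrs[OF G A]
  show False
    using Q_partition_coadj[OF A, of 0 2] Q_partition_coadj[OF A, of 1 3] three[of 0 1 4 5]
       three[of 0 3 4 5] three[of 1 0 4 5] three[of 2 1 4 5] three[of 4 0 1 5] three[of 4 0 3 5]
       three[of 4 1 2 5] three[of 4 2 3 5] three[of 5 0 1 4] three[of 5 0 3 4] three[of 5 1 2 4]
       three[of 5 2 3 4] two[of 4 0 1 5] two[of 4 0 3 5] two[of 4 1 2 5] two[of 4 2 3 5]
    by (simp add: G2_def join_K2_def mk_graph_def coadj_def verts_def adj_def; argo)
qed

lemma G3_no_Q_partition: "\<not> Q_partition G3 A"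
proof
  assume A: "Q_partition G3 A"
  have G: "simple_graph (G3)" by (simp add: G3_def join_K2_def simple_graph_mk_graph)
  note three = Q_partition_three_nbrs[OF G A] and two = Q_partition_two_common_nbrs[OF G A]
  show False
    using Q_partition_coadj[OF A, of 0 2] Q_partition_coadj[OF A, of 0 3]
       Q_partition_coadj[OF A, of 1 2] three[of 4 0 1 5] three[of 4 2 3 5] three[of 5 0 1 4]
       three[of 5 2 3 4] two[of 0 4 5 1] two[of 2 4 5 3] two[of 4 0 1 5] two[of 4 2 3 5]
    by (simp add: G3_def join_K2_def mk_graph_def coadj_def verts_def adj_def; argo)
qed

lemma G4_no_Q_partition: "\<not> Q_partition G4 A"
proof
  assume A: "Q_partition G4 A"
  have G: "simple_graph (G4)" by (simp add: G4_def simple_graph_mk_graph)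
  note three = Q_partition_three_nbrs[OF G A] and two = Q_partition_two_common_nbrs[OF G A]
  show False
    using Q_partition_coadj[OF A, of 0 4] Q_partition_coadj[OF A, of 1 5]
       Q_partition_coadj[OF A, of 2 5] Q_partition_coadj[OF A, of 3 4]
       Q_partition_coadj[OF A, of 4 5] two[of 0 1 2 3] two[of 1 0 3 2]
    by (simp add: G4_def mk_graph_def coadj_def verts_def adj_def; argo)
qed

lemma G5k_no_Q_partition:
  assumes "k \<le> 3"
  shows "\<not> Q_partition (G5k k) A"
proof
  assume A: "Q_partition (G5k k) A"
  have G: "simple_graph ((G5k k))" by (simp add: G5k_def simple_graph_mk_graph)
  note three = Q_partition_three_nbrs[OF G A] and two = Q_partition_two_common_nbrs[OF G A]
  show False
    using Q_partition_coadj[OF A, of 0 4] Q_partition_coadj[OF A, of 1 6]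
       Q_partition_coadj[OF A, of 1 7] Q_partition_coadj[OF A, of 2 5]
       Q_partition_coadj[OF A, of 2 7] Q_partition_coadj[OF A, of 3 5] three[of 0 1 2 3]
       three[of 0 5 6 7] three[of 4 1 2 3] three[of 4 5 6 7]
    by (simp add: G5k_def mk_graph_def coadj_def verts_def adj_def; argo)
qed

lemma N_graphs_no_Q_partition: "F \<in> N_graphs \<Longrightarrow> \<not> Q_partition F A"
  unfolding N_graphs_def
  using co_cycle_no_Q_partition G1_no_Q_partition G2_no_Q_partition G3_no_Q_partition
    G4_no_Q_partition G5k_no_Q_partition by auto

lemma Q_partition_imp_Free: "Q_partition H A \<Longrightarrow> Free N_graphs H"
  unfolding Free_def using Q_partition_induced N_graphs_no_Q_partition by blast

section \<open>Shortest odd closed walks\<close>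

definition chordless_cycle :: "('a \<Rightarrow> 'a \<Rightarrow> bool) \<Rightarrow> (nat \<Rightarrow> 'a) \<Rightarrow> nat \<Rightarrow> bool" where
  "chordless_cycle R c m \<longleftrightarrow> 3 \<le> m \<and> inj_on c {..<m}
     \<and> (\<forall>i<m. \<forall>j<m. i < j \<longrightarrow> (R (c i) (c j) \<longleftrightarrow> j = Suc i \<or> (i = 0 \<and> j = m - 1)))"

lemma relpowp_sym:
  assumes "symp R" "(R ^^ n) x y"
  shows "(R ^^ n) y x"
  using assms(2)
proof (induction n arbitrary: y)
  case (Suc n)
  then obtain z where "(R ^^ n) x z" "R z y" by (auto elim: relpowp_Suc_E)
  then show ?case using Suc.IH assms(1) by (meson relpowp_Suc_I2 sympD)
qed simp

lemma relpowp_segment: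
  assumes "\<forall>k<n. R (c k) (c (Suc k))" "i \<le> j" "j \<le> n"
  shows "(R ^^ (j - i)) (c i) (c j)"
  unfolding relpowp_fun_conv using assms by (intro exI[of _ "\<lambda>k. c (i + k)"]) auto

lemma shortest_odd_closed_walk:
  assumes sym: "symp R" and irrefl: "\<And>x. \<not> R x x" and walk: "(R ^^ n) u u" "odd n"
  shows "\<exists>c m. odd m \<and> chordless_cycle R c m"
proof -
  define P where "P m \<longleftrightarrow> (\<exists>u. (R ^^ m) u u) \<and> odd m" for m
  define m where "m = (LEAST m. P m)"
  have "P m" unfolding m_def by (rule LeastI[of P n]) (use walk in \<open>auto simp: P_def\<close>)
  then obtain c where c0: "c 0 = c m" and step: "\<forall>k<m. R (c k) (c (Suc k))" and odd: "odd m"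
    unfolding P_def relpowp_fun_conv by (metis (no_types))
  have minimal: "\<not> (R ^^ k) v v" if "k < m" "odd k" for k v
    using not_less_Least[of k P] that unfolding m_def P_def by blast
  have seg: "(R ^^ (j - i)) (c i) (c j)" if "i \<le> j" "j \<le> m" for i j
    using relpowp_segment[of m R c i j] step that by blast
  have wrap: "(R ^^ (m - j + i)) (c j) (c i)" if "i \<le> j" "j \<le> m" for i j
  proof -
    have "(R ^^ (m - j)) (c j) (c 0)" using seg[of j m] c0 that by simp
    moreover have "(R ^^ i) (c 0) (c i)" using seg[of 0 i] that by simp
    ultimately show ?thesis by (rule relpowp_trans)
  qed
  have "m \<noteq> 1"
    using step irrefl c0 by (metis One_nat_def less_one)
  then have m3: "3 \<le> m" using odd by presburger
  have "c i \<noteq> c j" if ij: "i < j" "j < m" for i j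
  proof
    assume "c i = c j"
    then have "(R ^^ (j - i)) (c i) (c i)" "(R ^^ (m - j + i)) (c i) (c i)"
      using seg[of i j] wrap[of i j] ij by simp_all
    moreover have "j - i < m" "m - j + i < m" using ij by arith+
    moreover have "odd (j - i) \<or> odd (m - j + i)" using odd ij by presburger
    ultimately show False using minimal by blast
  qed
  then have "inj_on c {..<m}" by (metis inj_onI lessThan_iff linorder_neqE_nat)
  moreover have "R (c i) (c j) \<longleftrightarrow> j = Suc i \<or> (i = 0 \<and> j = m - 1)" if ij: "i < j" "j < m" for i j
  proof
    assume chord: "R (c i) (c j)"
    show "j = Suc i \<or> (i = 0 \<and> j = m - 1)"
    proof (rule ccontr)
      assume "\<not> ?thesis"
      then have short: "j - i + 1 < m" "m - j + i + 1 < m" using ij by arith+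
      have "(R ^^ (j - i)) (c i) (c j)" "(R ^^ (m - j + i)) (c j) (c i)"
        using seg[of i j] wrap[of i j] ij by simp_all
      then have "(R ^^ (j - i + 1)) (c i) (c i)" "(R ^^ (m - j + i + 1)) (c j) (c j)"
        using chord sym by (auto intro: relpowp_Suc_I dest: sympD)
      moreover have "odd (j - i + 1) \<or> odd (m - j + i + 1)" using odd ij by presburger
      ultimately show False using minimal short by blast
    qed
  next
    assume "j = Suc i \<or> (i = 0 \<and> j = m - 1)"
    then show "R (c i) (c j)"
    proof
      assume "i = 0 \<and> j = m - 1"
      then have "Suc j = m" "i = 0" using ij by auto
      then have "R (c j) (c i)" using step c0 by (metis lessI)
      then show ?thesis using sym by (rule sympD[rotated])
    qed (use step ij in simp)
  qed
  ultimately show ?thesis using odd m3 unfolding chordless_cycle_def by blast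
qed

lemma chordless_cycle_sym:
  assumes "symp R" "\<And>x. \<not> R x x" "chordless_cycle R c m" "i < m" "j < m"
  shows "R (c i) (c j) \<longleftrightarrow> j = Suc i \<or> i = Suc j \<or> (i = 0 \<and> j = m - 1) \<or> (j = 0 \<and> i = m - 1)"
proof -
  have m: "3 \<le> m" using assms(3) by (simp add: chordless_cycle_def)
  consider "i < j" | "i = j" | "j < i" by arith
  then show ?thesis
  proof cases
    case 2 then show ?thesis using assms(2) m by auto
  next
    case 1 then show ?thesis using assms(3-5) by (auto simp: chordless_cycle_def)
  next
    case 3
    have "R (c i) (c j) \<longleftrightarrow> R (c j) (c i)" using assms(1) by (auto dest: sympD)
    then show ?thesis using 3 assms(3-5) by (auto simp: chordless_cycle_def)
  qed
qed

lemma chordless_coadj_cycle_in_verts: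
  assumes "chordless_cycle (coadj H) c m" "i < m"
  shows "c i \<in> verts H"
proof (cases "Suc i < m")
  case True
  then have "coadj H (c i) (c (Suc i))" using assms by (simp add: chordless_cycle_def)
  then show ?thesis by (rule coadj_in_verts)
next
  case False
  then have "coadj H (c 0) (c i)" using assms by (simp add: chordless_cycle_def)
  then show ?thesis by (rule coadj_in_verts)
qed

lemma induced_embeds_co_cycle:
  assumes H: "simple_graph H" and c: "chordless_cycle (coadj H) c m"
  shows "induced_embeds (co_cycle m) H"
  unfolding co_cycle_def
proof (rule induced_embeds_mk_graphI[OF H])
  have inj: "inj_on c {..<m}"
    and chord: "\<forall>i<m. \<forall>j<m. i < j \<longrightarrow> (coadj H (c i) (c j) \<longleftrightarrow> j = Suc i \<or> (i = 0 \<and> j = m - 1))"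
    using c by (auto simp: chordless_cycle_def)
  show V: "set (map c [0..<m]) \<subseteq> verts H"
    using chordless_coadj_cycle_in_verts[OF c] by auto
  show "distinct (map c [0..<m])" using inj by (simp add: distinct_map atLeast0LessThan)
  show "length (map c [0..<m]) = m" by simp
  fix i j assume ij: "i < j" "j < m"
  have "c i \<in> verts H" "c j \<in> verts H" "c i \<noteq> c j"
    using V inj ij by (auto simp: inj_on_def)
  then have "adj H (c i) (c j) \<longleftrightarrow> \<not> coadj H (c i) (c j)" by (simp add: coadj_def)
  also have "\<dots> \<longleftrightarrow> adj (co_cycle m) i j" using chord ij adj_co_cycle by auto
  finally show "adj H (map c [0..<m] ! i) (map c [0..<m] ! j) \<longleftrightarrow>
      (\<lambda>x y. y \<noteq> (x + 1) mod m \<and> x \<noteq> (y + 1) mod m) i j \<or>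
      (\<lambda>x y. y \<noteq> (x + 1) mod m \<and> x \<noteq> (y + 1) mod m) j i"
    using ij by (simp add: co_cycle_def mk_graph_def adj_def)
qed

section \<open>Excluded configurations in the complement\<close>

lemma all_less_numeral_nat:
  "(\<forall>i < numeral k. P i) \<longleftrightarrow> P (pred_numeral k) \<and> (\<forall>i < pred_numeral k. P (i :: nat))"
  by (simp add: numeral_eq_Suc All_less_Suc)

lemma G5k_in_N_graphs:
  assumes "k \<le> 3"
  shows "G5k k \<in> N_graphs"
proof -
  have "k = 0 \<or> k = 1 \<or> k = 2 \<or> k = 3" using assms by arith
  then show ?thesis by (auto simp: N_graphs_def)
qed

locale N_free =
  fixes H :: "'a graph"
  assumes simple: "simple_graph H" and free: "Free N_graphs H"
begin

lemma coadj_sym: "coadj H x y \<longleftrightarrow> coadj H y x"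
  using coadj_commute[OF simple] .

lemma coadj_symp: "symp (coadj H)"
  using coadj_sym by (blast intro: sympI)

lemma forbidden_configuration:
  assumes "F \<in> N_graphs" "F = mk_graph n P" "distinct xs" "set xs \<subseteq> verts H" "length xs = n"
    "\<forall>j<n. \<forall>i<j. adj H (xs ! i) (xs ! j) \<longleftrightarrow> P i j \<or> P j i"
  shows False
  using induced_embeds_mk_graphI[OF simple assms(3-5), of P] assms(1,2,6) free
  unfolding Free_def by blast

lemma no_coadj_triangle:
  assumes "coadj H a b" "coadj H b c" "coadj H a c"
  shows False
  by (rule forbidden_configuration[OF _ co_cycle_def, of 3 "[a, b, c]"])
    (use assms in \<open>auto simp: N_graphs_def coadj_def all_less_numeral_nat\<close>)

lemma no_G1_configuration:
  assumes "distinct [a, b, c, d, u, v]" "{a, b, c, d, u, v} \<subseteq> verts H"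
    and "coadj H a b" "coadj H b c" "coadj H c d" "\<not> coadj H a c" "\<not> coadj H a d" "\<not> coadj H b d"
    and "\<forall>z\<in>{a, b, c, d, v}. \<not> coadj H u z" "\<forall>z\<in>{a, b, c, d}. \<not> coadj H v z"
  shows False
  by (rule forbidden_configuration[OF _ G1_def[unfolded join_K2_def], of "[c, a, d, b, u, v]"])
    (use assms in \<open>auto simp: N_graphs_def all_less_numeral_nat adj_iff_not_coadj coadj_sym\<close>)

lemma no_G2_configuration:
  assumes "distinct [a, b, c, d, u, v]" "{a, b, c, d, u, v} \<subseteq> verts H"
    and "coadj H a b" "coadj H c d" "\<not> coadj H a c" "\<not> coadj H a d" "\<not> coadj H b c" "\<not> coadj H b d"
    and "\<forall>z\<in>{a, b, c, d, v}. \<not> coadj H u z" "\<forall>z\<in>{a, b, c, d}. \<not> coadj H v z"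
  shows False
  by (rule forbidden_configuration[OF _ G2_def[unfolded join_K2_def], of "[a, c, b, d, u, v]"])
    (use assms in \<open>auto simp: N_graphs_def all_less_numeral_nat adj_iff_not_coadj coadj_sym\<close>)

lemma no_G3_configuration:
  assumes "distinct [a, b, c, d, u, v]" "{a, b, c, d, u, v} \<subseteq> verts H"
    and "coadj H a b" "coadj H b c" "coadj H c d" "coadj H d a" "\<not> coadj H a c" "\<not> coadj H b d"
    and "\<forall>z\<in>{a, b, c, d, v}. \<not> coadj H u z" "\<forall>z\<in>{a, b, c, d}. \<not> coadj H v z"
  shows False
  by (rule forbidden_configuration[OF _ G3_def[unfolded join_K2_def], of "[a, c, b, d, u, v]"])
    (use assms in \<open>auto simp: N_graphs_def all_less_numeral_nat adj_iff_not_coadj coadj_sym\<close>)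

lemma no_coisolated_pair_beside_two_coedges:
  assumes e: "coadj H x1 y1" "coadj H x2 y2" and d: "distinct [x1, y1, x2, y2, u, v]"
    and uv: "u \<in> verts H" "v \<in> verts H"
    and iso: "\<forall>z\<in>{x1, y1, x2, y2, v}. \<not> coadj H u z" "\<forall>z\<in>{x1, y1, x2, y2}. \<not> coadj H v z"
  shows False
proof -
  have V: "{x1, y1, x2, y2, u, v} \<subseteq> verts H" using e uv by (auto dest: coadj_in_verts)
  note facts = V d e iso coadj_sym
  have no_tri: "\<not> (coadj H a b \<and> coadj H b c \<and> coadj H a c)" for a b c
    using no_coadj_triangle by blast
  consider (C4_straight) "coadj H x1 x2" "coadj H y1 y2"
    | (P4_x1x2) "coadj H x1 x2" "\<not> coadj H y1 y2"
    | (C4_crossed) "\<not> coadj H x1 x2" "coadj H x1 y2" "coadj H y1 x2"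
    | (P4_x1y2) "\<not> coadj H x1 x2" "coadj H x1 y2" "\<not> coadj H y1 x2"
    | (P4_y1x2) "\<not> coadj H x1 x2" "\<not> coadj H x1 y2" "coadj H y1 x2"
    | (P4_y1y2) "\<not> coadj H x1 x2" "\<not> coadj H x1 y2" "\<not> coadj H y1 x2" "coadj H y1 y2"
    | (two_K2) "\<not> coadj H x1 x2" "\<not> coadj H x1 y2" "\<not> coadj H y1 x2" "\<not> coadj H y1 y2"
    by blast
  then show False
  proof cases
    case C4_straight
    then show False
      using no_G3_configuration[of x1 x2 y2 y1 u v] no_tri[of x1 y1 x2] no_tri[of x1 x2 y2] facts
      by auto
  next
    case P4_x1x2
    then show False
      using no_G1_configuration[of y1 x1 x2 y2 u v] no_tri[of x1 y1 x2] no_tri[of x1 x2 y2] facts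
      by auto
  next
    case C4_crossed
    then show False
      using no_G3_configuration[of x1 y2 x2 y1 u v] no_tri[of x1 y1 y2] no_tri[of y1 x2 y2] facts
      by auto
  next
    case P4_x1y2
    then show False
      using no_G1_configuration[of y1 x1 y2 x2 u v] no_tri[of x1 y1 y2] facts by auto
  next
    case P4_y1x2
    then show False
      using no_G1_configuration[of x1 y1 x2 y2 u v] no_tri[of y1 x2 y2] facts by auto
  next
    case P4_y1y2
    then show False using no_G1_configuration[of x1 y1 y2 x2 u v] facts by auto
  next
    case two_K2
    then show False using no_G2_configuration[of x1 y1 x2 y2 u v] facts by auto
  qed
qed

lemma no_G4_configuration:
  assumes "distinct [a, b, c, d, e, f]" "{a, b, c, d, e, f} \<subseteq> verts H"
    and "\<forall>x\<in>{a, b, c, d}. \<forall>y\<in>{a, b, c, d}. \<not> coadj H x y"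
    and "coadj H e f" "coadj H e a" "coadj H e d" "\<not> coadj H e b" "\<not> coadj H e c"
    and "coadj H f b" "coadj H f c" "\<not> coadj H f a" "\<not> coadj H f d"
  shows False
  by (rule forbidden_configuration[OF _ G4_def, of "[a, b, c, d, e, f]"])
    (use assms in \<open>auto simp: N_graphs_def all_less_numeral_nat adj_iff_not_coadj coadj_sym\<close>)

lemma no_G5k_configuration:
  fixes k :: nat
  assumes "k \<le> 3" "distinct [x, p1, p2, p3, y, q1, q2, q3]"
    "{x, p1, p2, p3, y, q1, q2, q3} \<subseteq> verts H"
    and "\<forall>u\<in>{x, p1, p2, p3}. \<forall>v\<in>{x, p1, p2, p3}. \<not> coadj H u v"
    and "\<forall>u\<in>{y, q1, q2, q3}. \<forall>v\<in>{y, q1, q2, q3}. \<not> coadj H u v"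
    and "coadj H x y" "\<forall>q\<in>{q1, q2, q3}. \<not> coadj H x q" "\<forall>p\<in>{p1, p2, p3}. \<not> coadj H y p"
    and "coadj H p1 q2" "coadj H p1 q3" "coadj H p2 q1" "coadj H p2 q3" "coadj H p3 q1"
      "coadj H p3 q2"
    and "coadj H p1 q1 \<longleftrightarrow> k < 1" "coadj H p2 q2 \<longleftrightarrow> k < 2" "coadj H p3 q3 \<longleftrightarrow> k < 3"
  shows False
  by (rule forbidden_configuration[OF G5k_in_N_graphs[OF assms(1)] G5k_def,
        of "[x, p1, p2, p3, y, q1, q2, q3]"])
    (use assms in \<open>auto simp: N_graphs_def all_less_numeral_nat adj_iff_not_coadj coadj_sym\<close>)

lemma no_G5k_configuration_any_diagonal:
  assumes "distinct [x, p1, p2, p3, y, q1, q2, q3]" "{x, p1, p2, p3, y, q1, q2, q3} \<subseteq> verts H"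
    and "\<forall>u\<in>{x, p1, p2, p3}. \<forall>v\<in>{x, p1, p2, p3}. \<not> coadj H u v"
    and "\<forall>u\<in>{y, q1, q2, q3}. \<forall>v\<in>{y, q1, q2, q3}. \<not> coadj H u v"
    and "coadj H x y" "\<forall>q\<in>{q1, q2, q3}. \<not> coadj H x q" "\<forall>p\<in>{p1, p2, p3}. \<not> coadj H y p"
    and "coadj H p1 q2" "coadj H p1 q3" "coadj H p2 q1" "coadj H p2 q3" "coadj H p3 q1"
      "coadj H p3 q2"
  shows False
proof (cases "coadj H p1 q1"; cases "coadj H p2 q2"; cases "coadj H p3 q3")
  assume "coadj H p1 q1" "coadj H p2 q2" "coadj H p3 q3"
  then show False using no_G5k_configuration[of 0 x p1 p2 p3 y q1 q2 q3] assms by auto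
next
  assume "coadj H p1 q1" "coadj H p2 q2" "\<not> coadj H p3 q3"
  then show False using no_G5k_configuration[of 1 x p3 p1 p2 y q3 q1 q2] assms by auto
next
  assume "coadj H p1 q1" "\<not> coadj H p2 q2" "coadj H p3 q3"
  then show False using no_G5k_configuration[of 1 x p2 p1 p3 y q2 q1 q3] assms by auto
next
  assume "coadj H p1 q1" "\<not> coadj H p2 q2" "\<not> coadj H p3 q3"
  then show False using no_G5k_configuration[of 2 x p2 p3 p1 y q2 q3 q1] assms by auto
next
  assume "\<not> coadj H p1 q1" "coadj H p2 q2" "coadj H p3 q3"
  then show False using no_G5k_configuration[of 1 x p1 p2 p3 y q1 q2 q3] assms by auto
next
  assume "\<not> coadj H p1 q1" "coadj H p2 q2" "\<not> coadj H p3 q3"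
  then show False using no_G5k_configuration[of 2 x p1 p3 p2 y q1 q3 q2] assms by auto
next
  assume "\<not> coadj H p1 q1" "\<not> coadj H p2 q2" "coadj H p3 q3"
  then show False using no_G5k_configuration[of 2 x p1 p2 p3 y q1 q2 q3] assms by auto
next
  assume "\<not> coadj H p1 q1" "\<not> coadj H p2 q2" "\<not> coadj H p3 q3"
  then show False using no_G5k_configuration[of 3 x p1 p2 p3 y q1 q2 q3] assms by auto
qed

text \<open>Every \<open>p\<^sub>i\<close> misses at most one \<open>q\<^sub>j\<close> and vice versa, so the missed pairs lie on a
  perfect matching; the six matchings are the six relabellings below.\<close>

lemma no_G5k_configuration_near_complete:
  assumes d: "distinct [x, p1, p2, p3, y, q1, q2, q3]" and V:
    "{x, p1, p2, p3, y, q1, q2, q3} \<subseteq> verts H"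
    and cliques: "\<forall>u\<in>{x, p1, p2, p3}. \<forall>v\<in>{x, p1, p2, p3}. \<not> coadj H u v"
      "\<forall>u\<in>{y, q1, q2, q3}. \<forall>v\<in>{y, q1, q2, q3}. \<not> coadj H u v"
    and xy: "coadj H x y" "\<forall>q\<in>{q1, q2, q3}. \<not> coadj H x q" "\<forall>p\<in>{p1, p2, p3}. \<not> coadj H y p"
    and p_miss_one: "\<And>p q q'. p \<in> {p1, p2, p3} \<Longrightarrow> q \<in> {q1, q2, q3} \<Longrightarrow> q' \<in> {q1, q2, q3} \<Longrightarrow> q \<noteq> q'
      \<Longrightarrow> coadj H p q \<or> coadj H p q'"
    and q_miss_one: "\<And>q p p'. q \<in> {q1, q2, q3} \<Longrightarrow> p \<in> {p1, p2, p3} \<Longrightarrow> p' \<in> {p1, p2, p3} \<Longrightarrow> p \<noteq> p'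
      \<Longrightarrow> coadj H p q \<or> coadj H p' q"
  shows False
proof -
  note base = d V cliques xy
  have perm0: "\<not> (coadj H p1 q1 \<and> coadj H p1 q2 \<and> coadj H p2 q3 \<and> coadj H p2 q2
      \<and> coadj H p3 q3 \<and> coadj H p3 q1)"
    using no_G5k_configuration_any_diagonal[of x p1 p2 p3 y q3 q1 q2] base by auto
  have perm1: "\<not> (coadj H p1 q1 \<and> coadj H p1 q3 \<and> coadj H p2 q2 \<and> coadj H p2 q3
      \<and> coadj H p3 q2 \<and> coadj H p3 q1)"
    using no_G5k_configuration_any_diagonal[of x p1 p2 p3 y q2 q1 q3] base by auto
  have perm2: "\<not> (coadj H p1 q2 \<and> coadj H p1 q1 \<and> coadj H p2 q3 \<and> coadj H p2 q1
      \<and> coadj H p3 q3 \<and> coadj H p3 q2)"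
    using no_G5k_configuration_any_diagonal[of x p1 p2 p3 y q3 q2 q1] base by auto
  have perm3: "\<not> (coadj H p1 q2 \<and> coadj H p1 q3 \<and> coadj H p2 q1 \<and> coadj H p2 q3
      \<and> coadj H p3 q1 \<and> coadj H p3 q2)"
    using no_G5k_configuration_any_diagonal[of x p1 p2 p3 y q1 q2 q3] base by auto
  have perm4: "\<not> (coadj H p1 q3 \<and> coadj H p1 q1 \<and> coadj H p2 q2 \<and> coadj H p2 q1
      \<and> coadj H p3 q2 \<and> coadj H p3 q3)"
    using no_G5k_configuration_any_diagonal[of x p1 p2 p3 y q2 q3 q1] base by auto
  have perm5: "\<not> (coadj H p1 q3 \<and> coadj H p1 q2 \<and> coadj H p2 q1 \<and> coadj H p2 q2
      \<and> coadj H p3 q1 \<and> coadj H p3 q3)"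
    using no_G5k_configuration_any_diagonal[of x p1 p2 p3 y q1 q3 q2] base by auto
  have "q1 \<noteq> q2" "q1 \<noteq> q3" "q2 \<noteq> q3" "p1 \<noteq> p2" "p1 \<noteq> p3" "p2 \<noteq> p3"
    using d by auto
  then show False
    using perm0 perm1 perm2 perm3 perm4 perm5
      p_miss_one[of p1 q1 q2] p_miss_one[of p1 q1 q3] p_miss_one[of p1 q2 q3]
      p_miss_one[of p2 q1 q2] p_miss_one[of p2 q1 q3] p_miss_one[of p2 q2 q3]
      p_miss_one[of p3 q1 q2] p_miss_one[of p3 q1 q3] p_miss_one[of p3 q2 q3]
      q_miss_one[of q1 p1 p2] q_miss_one[of q1 p1 p3] q_miss_one[of q1 p2 p3]
      q_miss_one[of q2 p1 p2] q_miss_one[of q2 p1 p3] q_miss_one[of q2 p2 p3]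
      q_miss_one[of q3 p1 p2] q_miss_one[of q3 p1 p3] q_miss_one[of q3 p2 p3]
    by (simp only: insert_iff empty_iff simp_thms) argo
qed

lemma chordless_coadj_cycle_even:
  assumes c: "chordless_cycle (coadj H) c m"
  shows "even m"
proof (rule ccontr)
  assume odd: "odd m"
  have m3: "3 \<le> m" and inj: "inj_on c {..<m}" using c by (auto simp: chordless_cycle_def)
  show False
  proof (cases "m \<le> 7")
    case True
    then have "m = 3 \<or> m = 5 \<or> m = 7" using odd m3 by presburger
    then show False
      using induced_embeds_co_cycle[OF simple c] free by (auto simp: Free_def N_graphs_def)
  next
    case False
    note cyc = chordless_cycle_sym[OF coadj_symp coadj_irrefl c]
    have m9: "9 \<le> m" using False odd by presburger
    then have "m - 1 \<notin> {2, 3, 5, 7}" by auto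
    have "c i \<noteq> c j" if "i < m" "j < m" "i \<noteq> j" for i j
      using inj that by (auto simp: inj_on_def)
    then show False
      using no_G1_configuration[of "c 0" "c 1" "c 2" "c 3" "c 5" "c 7"] m9
        \<open>m - 1 \<notin> {2, 3, 5, 7}\<close> chordless_coadj_cycle_in_verts[OF c] cyc
      by simp
  qed
qed

lemma no_odd_closed_coadj_walk:
  assumes "(coadj H ^^ n) u u" "odd n"
  shows False
proof -
  show False
    using shortest_odd_closed_walk[OF coadj_symp coadj_irrefl assms] chordless_coadj_cycle_even
      by blast
qed

lemma coadj_bipartite: "\<exists>col :: 'a \<Rightarrow> bool. \<forall>x y. coadj H x y \<longrightarrow> col x \<noteq> col y"
proof -
  let ?R = "coadj H"
  note sym = coadj_symp
  define root where "root v = (SOME r. ?R\<^sup>*\<^sup>* r v)" for v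
  have root: "?R\<^sup>*\<^sup>* (root v) v" for v
    unfolding root_def by (rule someI[of _ v]) simp
  define col where "col v \<longleftrightarrow> (\<exists>n. even n \<and> (?R ^^ n) (root v) v)" for v
  have colouring: "col x \<noteq> col y" if xy: "?R x y" for x y
  proof -
    have "?R\<^sup>*\<^sup>* r x \<longleftrightarrow> ?R\<^sup>*\<^sup>* r y" for r
      using xy sym by (meson rtranclp.rtrancl_into_rtrancl sympD)
    then have same_root: "root y = root x" unfolding root_def by simp
    have parity: "even a \<longleftrightarrow> odd b" if a: "(?R ^^ a) (root x) x" and b: "(?R ^^ b) (root x) y" for a b
    proof -
      have "(?R ^^ Suc a) (root x) y" using a xy by (rule relpowp_Suc_I)
      moreover have "(?R ^^ b) y (root x)" using relpowp_sym[OF sym b] .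
      ultimately have "(?R ^^ (Suc a + b)) (root x) (root x)" by (rule relpowp_trans)
      then have "even (Suc a + b)" using no_odd_closed_coadj_walk by blast
      then show ?thesis by simp
    qed
    obtain a where a: "(?R ^^ a) (root x) x" using root rtranclp_power by metis
    obtain b where b: "(?R ^^ b) (root x) y" using root[of y] same_root rtranclp_power by metis
    show ?thesis
      unfolding col_def same_root using parity a b by metis
  qed
  then show ?thesis by blast
qed

end

section \<open>Choosing a Q-partition\<close>

locale N_free_coloured = N_free +
  fixes col :: "'a \<Rightarrow> bool"
  assumes col_coadj: "coadj H x y \<Longrightarrow> col x \<noteq> col y"
begin

abbreviation coconn where "coconn \<equiv> (coadj H)\<^sup>*\<^sup>*"

lemma coconn_sym: "coconn x y \<Longrightarrow> coconn y x"
  using symp_rtranclp[OF coadj_symp] by (meson sympD)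

lemma coconn_edge: "coadj H x y \<Longrightarrow> coconn x y" by auto

lemma coconn_trans: "coconn x y \<Longrightarrow> coconn y z \<Longrightarrow> coconn x z" by auto

lemma same_col_not_coadj: "col x = col y \<Longrightarrow> \<not> coadj H x y" using col_coadj by blast

lemma not_coconn_neq: "\<not> coconn x y \<Longrightarrow> x \<noteq> y" by auto
lemma not_coconn_not_coadj: "\<not> coconn x y \<Longrightarrow> \<not> coadj H x y" by auto
lemma not_coconn_step_right: "\<not> coconn x y \<Longrightarrow> coadj H y z \<Longrightarrow> \<not> coconn x z"
  by (meson coconn_edge coconn_sym coconn_trans)
lemma not_coconn_step_left: "\<not> coconn x y \<Longrightarrow> coadj H x z \<Longrightarrow> \<not> coconn z y"
  by (meson coconn_edge coconn_trans)
lemma not_coconn_sym: "\<not> coconn x y \<Longrightarrow> \<not> coconn y x" using coconn_sym by blast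

end

locale star_cocomponents = N_free_coloured +
  assumes disjoint_coedges_not_coconn:
    "coadj H x1 y1 \<Longrightarrow> coadj H x2 y2 \<Longrightarrow> distinct [x1, y1, x2, y2] \<Longrightarrow> \<not> coconn x1 x2"
begin

text \<open>Every co-component is then a star. Its centre is put into the partition class; for a
  single co-edge the endpoint with colour \<open>True\<close> is taken as the centre.\<close>

definition co_branching :: "'a \<Rightarrow> bool" where
  "co_branching v \<longleftrightarrow> (\<exists>a b. a \<noteq> b \<and> coadj H v a \<and> coadj H v b)"

definition centre :: "'a \<Rightarrow> bool" where
  "centre v \<longleftrightarrow> v \<in> verts H \<and> (co_branching v \<or> (\<exists>w. coadj H v w \<and> (\<forall>z. coadj H v z \<longrightarrow> z = w)
     \<and> (\<forall>z. coadj H w z \<longrightarrow> z = v) \<and> col v))"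

lemma not_both_co_branching:
  assumes xy: "coadj H x y"
  shows "\<not> (co_branching x \<and> co_branching y)"
proof
  assume "co_branching x \<and> co_branching y"
  then obtain a c where a: "coadj H x a" "a \<noteq> y" and c: "coadj H y c" "c \<noteq> x"
    unfolding co_branching_def by blast
  show False
  proof (cases "a = c")
    case True
    then show False using no_coadj_triangle[of x y a] xy a c coadj_sym by blast
  next
    case False
    have "distinct [x, a, y, c]" using a c False xy coadj_neq[of H] coadj_sym by auto
    then show False using disjoint_coedges_not_coconn[of x a y c] a c xy by (auto intro:
      coconn_edge)
  qed
qed

lemma centre_coneighbour: "centre c \<Longrightarrow> \<exists>l. coadj H c l"
  unfolding centre_def co_branching_def by blast

lemma centres_not_coadj:
  assumes cx: "centre x" and cy: "centre y"
  shows "\<not> coadj H x y"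
proof
  assume xy: "coadj H x y"
  have yx: "coadj H y x" using xy coadj_sym by simp
  consider "co_branching x" "co_branching y" | "co_branching x" "\<not> co_branching y"
    | "\<not> co_branching x" "co_branching y" | "\<not> co_branching x" "\<not> co_branching y" by blast
  then show False
  proof cases
    case 1 then show False using not_both_co_branching[OF xy] by blast
  next
    case 2
    then obtain w where w: "coadj H y w" "\<forall>z. coadj H w z \<longrightarrow> z = y" "\<forall>z. coadj H y z \<longrightarrow> z = w"
      using cy unfolding centre_def by blast
    then have "w = x" using yx by blast
    then show False using 2(1) w(2) unfolding co_branching_def by (metis coadj_sym)
  next
    case 3
    then obtain w where w: "coadj H x w" "\<forall>z. coadj H w z \<longrightarrow> z = x" "\<forall>z. coadj H x z \<longrightarrow> z = w"
      using cx unfolding centre_def by blast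
    then have "w = y" using xy by blast
    then show False using 3(2) w(2) unfolding co_branching_def by (metis coadj_sym)
  next
    case 4
    then have "col x" "col y" using cx cy unfolding centre_def by auto
    then show False using col_coadj[OF xy] by simp
  qed
qed

lemma noncentres_not_coadj:
  assumes "\<not> centre x" "\<not> centre y"
  shows "\<not> coadj H x y"
proof
  assume xy: "coadj H x y"
  have yx: "coadj H y x" using xy coadj_sym by simp
  have V: "x \<in> verts H" "y \<in> verts H" using xy coadj_in_verts[of H] by auto
  have "\<not> co_branching x" "\<not> co_branching y" using assms V unfolding centre_def by auto
  then have Nx: "\<forall>z. coadj H x z \<longrightarrow> z = y" and Ny: "\<forall>z. coadj H y z \<longrightarrow> z = x"
    using xy yx unfolding co_branching_def by blast+
  have "col x \<or> col y" using col_coadj[OF xy] by blast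
  then show False using assms V Nx Ny xy yx unfolding centre_def by blast
qed

lemma centres_not_coconn:
  assumes c1: "centre c1" and c2: "centre c2" and ne: "c1 \<noteq> c2"
  shows "\<not> coconn c1 c2"
proof
  assume cc: "coconn c1 c2"
  show False
  proof (cases "\<exists>l1 l2. coadj H c1 l1 \<and> coadj H c2 l2 \<and> l1 \<noteq> l2")
    case True
    then obtain l1 l2 where l: "coadj H c1 l1" "coadj H c2 l2" "l1 \<noteq> l2" by blast
    have "l1 \<noteq> c2" using centres_not_coadj[OF c1 c2] l(1) by blast
    moreover have "l2 \<noteq> c1" using centres_not_coadj[OF c2 c1] l(2) by blast
    ultimately have "distinct [c1, l1, c2, l2]" using l ne coadj_neq[of H] by auto
    then show False using disjoint_coedges_not_coconn[of c1 l1 c2 l2] l cc by blast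
  next
    case False
    obtain l1 where l1: "coadj H c1 l1" using centre_coneighbour[OF c1] by blast
    obtain l2 where l2: "coadj H c2 l2" using centre_coneighbour[OF c2] by blast
    have N1: "\<forall>z. coadj H c1 z \<longrightarrow> z = l2" using False l2 by blast
    have "l1 = l2" using N1 l1 by blast
    have "\<not> co_branching c1" using N1 unfolding co_branching_def by blast
    then obtain w where w: "coadj H c1 w" "\<forall>z. coadj H w z \<longrightarrow> z = c1"
      using c1 unfolding centre_def by blast
    have "w = l1" using N1 w(1) \<open>l1 = l2\<close> by blast
    moreover have "coadj H l1 c2" using l2 \<open>l1 = l2\<close> coadj_sym by simp
    ultimately show False using w(2) ne by blast
  qed
qed

lemma noncentre_unique_coneighbour:
  assumes nc: "\<not> centre b" and bw0: "coadj H b w0"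
  shows "\<exists>w. centre w \<and> (\<forall>z. coadj H b z \<longleftrightarrow> z = w)"
proof -
  have bV: "b \<in> verts H" and w0V: "w0 \<in> verts H" using bw0 coadj_in_verts[of H] by auto
  have "\<not> co_branching b" using nc bV unfolding centre_def by blast
  then have Nb: "\<forall>z. coadj H b z \<longleftrightarrow> z = w0" using bw0 unfolding co_branching_def by blast
  have "centre w0"
  proof (cases "co_branching w0")
    case True then show ?thesis using w0V unfolding centre_def by blast
  next
    case False
    have wb: "coadj H w0 b" using bw0 coadj_sym by simp
    have Nw: "\<forall>z. coadj H w0 z \<longrightarrow> z = b" using False wb unfolding co_branching_def by blast
    have "\<not> col b" using nc bV Nb Nw bw0 unfolding centre_def by blast
    then have "col w0" using col_coadj[OF bw0] by blast
    then show ?thesis using w0V wb Nw Nb unfolding centre_def by blast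
  qed
  then show ?thesis using Nb by blast
qed

lemma noncentre_coadj_one_of_three_centres:
  assumes bV: "b \<in> verts H" and nbc: "\<not> centre b" and ca: "centre a1" "centre a2" "centre a3"
    and ne: "a1 \<noteq> a2 \<and> a1 \<noteq> a3 \<and> a2 \<noteq> a3"
  shows "coadj H b a1 \<or> coadj H b a2 \<or> coadj H b a3"
proof (rule ccontr)
  assume nf: "\<not> (coadj H b a1 \<or> coadj H b a2 \<or> coadj H b a3)"
  have nf1: "\<not> coadj H b a1" "\<not> coadj H b a2" "\<not> coadj H b a3" using nf by auto
  have aV: "a1 \<in> verts H" "a2 \<in> verts H" "a3 \<in> verts H" using ca unfolding centre_def by auto
  have bne: "b \<noteq> a1" "b \<noteq> a2" "b \<noteq> a3" using nbc ca by auto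
  obtain l1 where l1: "coadj H a1 l1" using centre_coneighbour[OF ca(1)] by blast
  obtain l2 where l2: "coadj H a2 l2" using centre_coneighbour[OF ca(2)] by blast
  obtain l3 where l3: "coadj H a3 l3" using centre_coneighbour[OF ca(3)] by blast
  have n12: "\<not> coconn a1 a2" using centres_not_coconn[OF ca(1) ca(2)] ne by blast
  have n13: "\<not> coconn a1 a3" using centres_not_coconn[OF ca(1) ca(3)] ne by blast
  have n23: "\<not> coconn a2 a3" using centres_not_coconn[OF ca(2) ca(3)] ne by blast
  show False
  proof (cases "\<exists>w. coadj H b w")
    case False
    have iso: "\<And>z. \<not> coadj H b z" using False by blast
    have "a2 \<noteq> l2" using l2 coadj_neq[of H] by blast
    moreover have "a2 \<noteq> l3" using not_coconn_neq[OF not_coconn_step_right[OF n23 l3]] .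
    moreover have "l2 \<noteq> a3" using not_coconn_neq[OF not_coconn_step_left[OF n23 l2]] .
    moreover have "l2 \<noteq> l3" using not_coconn_neq[OF not_coconn_step_right[OF not_coconn_step_left[OF
      n23 l2] l3]] .
    moreover have "l2 \<noteq> b" using l2 iso coadj_sym by metis
    moreover have "l2 \<noteq> a1" using not_coconn_neq[OF not_coconn_step_right[OF n12 l2]] by metis
    moreover have "a3 \<noteq> l3" using l3 coadj_neq[of H] by blast
    moreover have "l3 \<noteq> b" using l3 iso coadj_sym by metis
    moreover have "l3 \<noteq> a1" using not_coconn_neq[OF not_coconn_step_right[OF n13 l3]] by metis
    ultimately have dist: "distinct [a2,l2,a3,l3,b,a1]" using ne bne by auto
    show False
      using no_coisolated_pair_beside_two_coedges[OF l2 l3 dist] bV aV(1) iso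
        not_coconn_not_coadj[OF n12] not_coconn_not_coadj[OF not_coconn_step_right[OF n12 l2]]
        not_coconn_not_coadj[OF n13]
        not_coconn_not_coadj[OF not_coconn_step_right[OF n13 l3]] by simp
  next
    case True
    then obtain w0 where "coadj H b w0" by blast
    then obtain w where cw: "centre w" and Nb: "\<forall>z. coadj H b z \<longleftrightarrow> z = w"
      using noncentre_unique_coneighbour[OF nbc] by blast
    have bw: "coadj H b w" using Nb by blast
    have wa: "w \<noteq> a1" "w \<noteq> a2" "w \<noteq> a3" using nf1 bw by auto
    have nw1: "\<not> coconn w a1" using centres_not_coconn[OF cw ca(1)] wa by blast
    have nw2: "\<not> coconn w a2" using centres_not_coconn[OF cw ca(2)] wa by blast
    have nw3: "\<not> coconn w a3" using centres_not_coconn[OF cw ca(3)] wa by blast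
    have "b \<noteq> w" using bw coadj_neq[of H] by blast
    moreover have "l1 \<noteq> w" using not_coconn_neq[OF not_coconn_step_right[OF nw1 l1]] by metis
    moreover have "l1 \<noteq> b" using l1 Nb wa coadj_sym by metis
    moreover have "a2 \<noteq> l1" using not_coconn_neq[OF not_coconn_step_right[OF not_coconn_sym[OF n12]
      l1]] .
    moreover have "a3 \<noteq> l1" using not_coconn_neq[OF not_coconn_step_right[OF not_coconn_sym[OF n13]
      l1]] .
    moreover have "a1 \<noteq> l1" using l1 coadj_neq[of H] by blast
    ultimately have dist: "distinct [b,w,a1,l1,a2,a3]" using ne wa bne by auto
    have a2_b: "\<not> coadj H a2 b" using nf1 coadj_sym by metis
    have a3_b: "\<not> coadj H a3 b" using nf1 coadj_sym by metis
    have a2_a1: "\<not> coadj H a2 a1" using not_coconn_not_coadj[OF not_coconn_sym[OF n12]] .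
    have a3_a1: "\<not> coadj H a3 a1" using not_coconn_not_coadj[OF not_coconn_sym[OF n13]] .
    have a2_w: "\<not> coadj H a2 w" using not_coconn_not_coadj[OF not_coconn_sym[OF nw2]] .
    have a3_w: "\<not> coadj H a3 w" using not_coconn_not_coadj[OF not_coconn_sym[OF nw3]] .
    have a2_l1: "\<not> coadj H a2 l1" using not_coconn_not_coadj[OF not_coconn_step_right[OF
      not_coconn_sym[OF n12] l1]] .
    have a3_l1: "\<not> coadj H a3 l1" using not_coconn_not_coadj[OF not_coconn_step_right[OF
      not_coconn_sym[OF n13] l1]] .
    show False
      using no_coisolated_pair_beside_two_coedges[OF bw l1 dist] aV(2) aV(3) a2_b a2_w a2_a1 a2_l1
        a3_b a3_w a3_a1 a3_l1
        not_coconn_not_coadj[OF n23] by simp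
  qed
qed

lemma noncentres_coadj_one_of_two_centres:
  assumes bV: "b \<in> verts H" "b' \<in> verts H" and nbc: "\<not> centre b" "\<not> centre b'"
    and ca: "centre a" "centre a'" and ne: "b \<noteq> b' \<and> a \<noteq> a'"
  shows "coadj H b a \<or> coadj H b a' \<or> coadj H b' a \<or> coadj H b' a'"
proof (rule ccontr)
  assume nf: "\<not> (coadj H b a \<or> coadj H b a' \<or> coadj H b' a \<or> coadj H b' a')"
  have nf1: "\<not> coadj H b a" "\<not> coadj H b a'" "\<not> coadj H b' a" "\<not> coadj H b' a'" using nf by auto
  have nf2: "\<not> coadj H a b" "\<not> coadj H a' b" "\<not> coadj H a b'" "\<not> coadj H a' b'" using nf1 coadj_sym
    by metis+
  have aV: "a \<in> verts H" "a' \<in> verts H" using ca unfolding centre_def by auto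
  have bne: "b \<noteq> a" "b \<noteq> a'" "b' \<noteq> a" "b' \<noteq> a'" using nbc ca by auto
  have ne1: "b \<noteq> b'" "a \<noteq> a'" using ne by auto
  obtain l where l: "coadj H a l" using centre_coneighbour[OF ca(1)] by blast
  obtain l' where l': "coadj H a' l'" using centre_coneighbour[OF ca(2)] by blast
  have naa: "\<not> coconn a a'" using centres_not_coconn[OF ca] ne by blast
  have aa: "\<not> coadj H a a'" using centres_not_coadj[OF ca] .
  have aa': "\<not> coadj H a' a" using centres_not_coadj[OF ca(2) ca(1)] .
  have bbn: "\<not> coadj H b b'" using noncentres_not_coadj[OF nbc] .
  have bbn': "\<not> coadj H b' b" using noncentres_not_coadj[OF nbc(2) nbc(1)] .
  have al: "a \<noteq> l" "a' \<noteq> l'" using l l' coadj_neq[of H] by auto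
  have al': "a \<noteq> l'" using not_coconn_neq[OF not_coconn_step_right[OF naa l']] .
  have la': "l \<noteq> a'" using not_coconn_neq[OF not_coconn_step_left[OF naa l]] .
  have ll': "l \<noteq> l'" using not_coconn_neq[OF not_coconn_step_right[OF not_coconn_step_left[OF naa l]
    l']] .
  have a'l: "\<not> coadj H a' l" using not_coconn_not_coadj[OF not_coconn_step_right[OF
    not_coconn_sym[OF naa] l]] .
  have al'n: "\<not> coadj H a l'" using not_coconn_not_coadj[OF not_coconn_step_right[OF naa l']] .
  have lb: "l \<noteq> b" "l \<noteq> b'" "l' \<noteq> b" "l' \<noteq> b'" using l l' nf2 by auto
  show False
  proof (cases "\<exists>w. coadj H b w"; cases "\<exists>w. coadj H b' w")
    assume nb: "\<not> (\<exists>w. coadj H b w)" and nb': "\<not> (\<exists>w. coadj H b' w)"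
    have b_isolated: "\<And>z. \<not> coadj H b z" using nb by blast
    have b'_isolated: "\<And>z. \<not> coadj H b' z" using nb' by blast
    have dist: "distinct [a,l,a',l',b,b']" using al al' la' ll' lb bne ne1 by auto
    show False using no_coisolated_pair_beside_two_coedges[OF l l' dist] bV b_isolated b'_isolated
      by simp
  next
    assume nb: "\<not> (\<exists>w. coadj H b w)" and yb': "\<exists>w. coadj H b' w"
    have b_isolated: "\<And>z. \<not> coadj H b z" using nb by blast
    obtain w0 where "coadj H b' w0" using yb' by blast
    then obtain w where cw: "centre w" and Nb: "\<forall>z. coadj H b' z \<longleftrightarrow> z = w"
      using noncentre_unique_coneighbour[OF nbc(2)] by blast
    have bw: "coadj H b' w" using Nb by blast
    have wb: "coadj H w b'" using bw coadj_sym by metis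
    have wa: "w \<noteq> a" "w \<noteq> a'" using nf1 bw by auto
    have nwa: "\<not> coconn w a" "\<not> coconn w a'" using centres_not_coconn[OF cw ca(1)]
      centres_not_coconn[OF cw ca(2)] wa by auto
    have lw: "l \<noteq> w" using not_coconn_neq[OF not_coconn_step_right[OF nwa(1) l]] by metis
    have wb2: "w \<noteq> b'" "w \<noteq> b" using bw coadj_neq[of H] b_isolated coadj_sym by metis+
    have dist: "distinct [a,l,w,b',b,a']" using al la' lw lb wa wb2 bne ne1 by auto
    have a'_w: "\<not> coadj H a' w" using not_coconn_not_coadj[OF not_coconn_sym[OF nwa(2)]] .
    show False using no_coisolated_pair_beside_two_coedges[OF l wb dist] bV(1) aV(2) b_isolated aa'
      a'l a'_w
      nf2(4) by simp
  next
    assume yb: "\<exists>w. coadj H b w" and nb': "\<not> (\<exists>w. coadj H b' w)"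
    have b'_isolated: "\<And>z. \<not> coadj H b' z" using nb' by blast
    obtain w0 where "coadj H b w0" using yb by blast
    then obtain w where cw: "centre w" and Nb: "\<forall>z. coadj H b z \<longleftrightarrow> z = w"
      using noncentre_unique_coneighbour[OF nbc(1)] by blast
    have bw: "coadj H b w" using Nb by blast
    have wb: "coadj H w b" using bw coadj_sym by metis
    have wa: "w \<noteq> a" "w \<noteq> a'" using nf1 bw by auto
    have nwa: "\<not> coconn w a" "\<not> coconn w a'" using centres_not_coconn[OF cw ca(1)]
      centres_not_coconn[OF cw ca(2)] wa by auto
    have lw: "l \<noteq> w" using not_coconn_neq[OF not_coconn_step_right[OF nwa(1) l]] by metis
    have wb2: "w \<noteq> b" "w \<noteq> b'" using bw coadj_neq[of H] b'_isolated coadj_sym by metis+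
    have dist: "distinct [a,l,w,b,b',a']" using al la' lw lb wa wb2 bne ne1 by auto
    have a'_w: "\<not> coadj H a' w" using not_coconn_not_coadj[OF not_coconn_sym[OF nwa(2)]] .
    show False using no_coisolated_pair_beside_two_coedges[OF l wb dist] bV(2) aV(2) b'_isolated aa'
      a'l a'_w
      nf2(2) by simp
  next
    assume yb: "\<exists>w. coadj H b w" and yb': "\<exists>w. coadj H b' w"
    obtain w0 where "coadj H b w0" using yb by blast
    then obtain w where cw: "centre w" and Nb: "\<forall>z. coadj H b z \<longleftrightarrow> z = w"
      using noncentre_unique_coneighbour[OF nbc(1)] by blast
    obtain w0' where "coadj H b' w0'" using yb' by blast
    then obtain w' where cw': "centre w'" and Nb': "\<forall>z. coadj H b' z \<longleftrightarrow> z = w'"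
      using noncentre_unique_coneighbour[OF nbc(2)] by blast
    have bw: "coadj H b w" "coadj H b' w'" using Nb Nb' by auto
    have wa: "w \<noteq> a" "w \<noteq> a'" "w' \<noteq> a" "w' \<noteq> a'" using nf1 bw by auto
    show False
    proof (cases "w = w'")
      case False
      have x: "b \<noteq> w" "b' \<noteq> w'" using bw coadj_neq[of H] by auto
      have y: "b \<noteq> w'" using bbn' bw(2) by metis
      have z: "w \<noteq> b'" using bbn bw(1) by metis
      have dist: "distinct [b,w,b',w',a,a']" using x y z False wa bne ne1 by auto
      have c1: "\<not> coadj H a w" "\<not> coadj H a w'" "\<not> coadj H a' w" "\<not> coadj H a' w'"
        using centres_not_coadj[OF ca(1) cw] centres_not_coadj[OF ca(1) cw'] centres_not_coadj[OF
          ca(2) cw] centres_not_coadj[OF ca(2) cw'] by auto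
      show False using no_coisolated_pair_beside_two_coedges[OF bw dist aV] nf2(1) c1(1) nf2(3)
        c1(2) nf2(2) c1(3) nf2(4) c1(4) aa by simp
    next
      case True
      have c1: "\<not> coadj H a w" "\<not> coadj H a' w" using centres_not_coadj[OF ca(1) cw]
        centres_not_coadj[OF ca(2) cw] by auto
      have bl: "\<not> coadj H b l" "\<not> coadj H b l'" "\<not> coadj H b' l" "\<not> coadj H b' l'"
        using Nb Nb' True l l' c1 by auto
      have dist: "distinct [a,l,a',l',b,b']" using al al' la' ll' lb bne ne1 by auto
      show False using no_coisolated_pair_beside_two_coedges[OF l l' dist] bV nf1(1) bl(1) nf1(2)
        bl(2) nf1(3) bl(3) nf1(4) bl(4) bbn by simp
    qed
  qed
qed

lemma Q_partition_centres: "Q_partition H {v. centre v}"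
  unfolding Q_partition_def
proof (intro conjI ballI impI)
  show "{v. centre v} \<subseteq> verts H" unfolding centre_def by blast
qed (use centres_not_coadj noncentres_not_coadj noncentre_coadj_one_of_three_centres
    noncentres_coadj_one_of_two_centres in auto)

end

lemma (in N_free_coloured) Q_partition_if_star_cocomponents:
  assumes "\<And>x1 y1 x2 y2. coadj H x1 y1 \<Longrightarrow> coadj H x2 y2 \<Longrightarrow> distinct [x1, y1, x2, y2]
    \<Longrightarrow> \<not> coconn x1 x2"
  shows "\<exists>A. Q_partition H A"
proof -
  interpret star_cocomponents H col using assms by unfold_locales
  show ?thesis using Q_partition_centres by blast
qed

context N_free_coloured
begin

lemma coconn_closed:
  "coconn x y \<Longrightarrow> x \<in> S \<Longrightarrow> (\<And>p q. p \<in> S \<Longrightarrow> coadj H p q \<Longrightarrow> q \<in> S) \<Longrightarrow> y \<in> S"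
  by (induction rule: rtranclp_induct) auto

lemma coneighbours_eq_of_cross_independent:
  assumes V: "a \<in> verts H" "a' \<in> verts H" and cl: "col a = col a'" "col b = col b'" "col a \<noteq> col b"
    and ne: "a \<noteq> a'" "b \<noteq> b'"
    and nf: "\<not> coadj H a b" "\<not> coadj H a b'" "\<not> coadj H a' b" "\<not> coadj H a' b'"
    and bv: "coadj H b v" and bw: "coadj H b' w"
  shows "v = w"
proof (rule ccontr)
  assume vw: "v \<noteq> w"
  have vb: "coadj H v b" and wb': "coadj H w b'" using bv bw coadj_sym by metis+
  have cv: "col v \<noteq> col b" "col w \<noteq> col b'" using col_coadj bv bw by auto
  have "v \<noteq> b" "w \<noteq> b'" using bv bw coadj_neq[of H] by auto
  moreover have "v \<noteq> b'" using cv cl by auto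
  moreover have "b \<noteq> w" using cv cl by auto
  moreover have "v \<noteq> a" "v \<noteq> a'" "w \<noteq> a" "w \<noteq> a'" using nf bv bw coadj_sym by metis+
  moreover have "b \<noteq> a" "b \<noteq> a'" "b' \<noteq> a" "b' \<noteq> a'" using cl by auto
  ultimately have dist: "distinct [v,b,w,b',a,a']" using ne vw by auto
  have n1: "\<not> coadj H a v" "\<not> coadj H a w" "\<not> coadj H a' v" "\<not> coadj H a' w"
    using same_col_not_coadj cv cl by metis+
  have n2: "\<not> coadj H a b" "\<not> coadj H a b'" "\<not> coadj H a' b" "\<not> coadj H a' b'" using nf by auto
  have n3: "\<not> coadj H a a'" using same_col_not_coadj cl by metis
  show False using no_coisolated_pair_beside_two_coedges[OF vb wb' dist] V n1(1) n2(1) n1(2) n2(2)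
    n1(3) n2(3) n1(4) n2(4) n3 by simp
qed

lemma unique_common_coneighbour:
  assumes V: "a \<in> verts H" "a' \<in> verts H" and cl: "col a = col a'" "col b = col b'" "col a \<noteq> col b"
    and ne: "a \<noteq> a'" "b \<noteq> b'"
    and nf: "\<not> coadj H a b" "\<not> coadj H a b'" "\<not> coadj H a' b" "\<not> coadj H a' b'"
    and nb: "coadj H b w0" "coadj H b' w1"
  shows "\<exists>w. (\<forall>z. coadj H b z \<longleftrightarrow> z = w) \<and> (\<forall>z. coadj H b' z \<longleftrightarrow> z = w)"
proof -
  have eq: "v = w" if "coadj H b v" "coadj H b' w" for v w
    using coneighbours_eq_of_cross_independent[OF V cl ne nf that] by blast
  have "\<forall>z. coadj H b z \<longleftrightarrow> z = w1" using eq nb by blast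
  moreover have "\<forall>z. coadj H b' z \<longleftrightarrow> z = w1" using eq nb by blast
  ultimately show ?thesis by blast
qed

end

locale coconnected = N_free_coloured +
  assumes coconnected: "x \<in> verts H \<Longrightarrow> y \<in> verts H \<Longrightarrow> coconn x y"
    and has_coneighbour: "x \<in> verts H \<Longrightarrow> \<exists>y. coadj H x y"
begin

lemma no_cross_independent_pairs:
  assumes V: "a \<in> verts H" "a' \<in> verts H" "b \<in> verts H" "b' \<in> verts H"
    and cl: "col a = col a'" "col b = col b'" "col a \<noteq> col b"
    and ne: "a \<noteq> a'" "b \<noteq> b'"
    and nf: "\<not> coadj H a b" "\<not> coadj H a b'" "\<not> coadj H a' b" "\<not> coadj H a' b'"
  shows False
proof -
  obtain w0 where "coadj H b w0" using has_coneighbour V by blast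
  moreover obtain w1 where "coadj H b' w1" using has_coneighbour V by blast
  ultimately obtain w where Nb: "\<forall>z. coadj H b z \<longleftrightarrow> z = w" and Nb': "\<forall>z. coadj H b' z \<longleftrightarrow> z = w"
    using unique_common_coneighbour[OF V(1,2) cl ne nf] by blast
  have nf': "\<not> coadj H b a" "\<not> coadj H b a'" "\<not> coadj H b' a" "\<not> coadj H b' a'" using nf coadj_sym
    by metis+
  obtain u0 where "coadj H a u0" using has_coneighbour V by blast
  moreover obtain u1 where "coadj H a' u1" using has_coneighbour V by blast
  moreover have cl3': "col b \<noteq> col a" using cl(3) by simp
  ultimately obtain u where Na: "\<forall>z. coadj H a z \<longleftrightarrow> z = u" and Na': "\<forall>z. coadj H a' z \<longleftrightarrow> z = u"
    using unique_common_coneighbour[OF V(3,4) cl(2,1) cl3' ne(2,1) nf'(1,2,3,4)] by blast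
  have au: "coadj H a u" "coadj H a' u" and bw: "coadj H b w" "coadj H b' w" using Na Na' Nb Nb'
    by auto
  have cu: "col u \<noteq> col a" and cw: "col w \<noteq> col b" using col_coadj au bw by auto
  have uw: "u \<noteq> w" using cu cw cl by auto
  show False
  proof (cases "coadj H u w")
    case True
    have uV: "u \<in> verts H" and wV: "w \<in> verts H" using au bw coadj_in_verts(2)[of H] by auto
    have "u \<noteq> a" "u \<noteq> a'" "w \<noteq> b" "w \<noteq> b'" using au bw coadj_neq[of H] by auto
    moreover have "u \<noteq> b" "u \<noteq> b'" using nf au by auto
    moreover have "w \<noteq> a" "w \<noteq> a'" using nf' bw by auto
    moreover have "a \<noteq> b" "a \<noteq> b'" "a' \<noteq> b" "a' \<noteq> b'" using cl by auto
    ultimately have dist: "distinct [a,b,b',a',u,w]" using uw ne by auto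
    have x: "\<not> coadj H a w" "\<not> coadj H a' w" using Na Na' uw by auto
    have y: "\<not> coadj H b u" "\<not> coadj H b' u" using Nb Nb' uw by auto
    have z: "\<not> coadj H b b'" "\<not> coadj H a a'" using same_col_not_coadj cl by metis+
    have ua: "coadj H u a" "coadj H u a'" "coadj H w b" "coadj H w b'" using au bw coadj_sym
      by metis+
    show False
      using no_G4_configuration[of a b b' a' u w] V uV wV dist True ua x y z nf nf'
      by (simp add: coadj_irrefl[of H] coadj_sym)
  next
    case False
    have ex: "\<exists>x1 y1. coadj H u x1 \<and> coadj H x1 y1 \<and> y1 \<noteq> u"
    proof (rule ccontr)
      assume nex: "\<not> (\<exists>x1 y1. coadj H u x1 \<and> coadj H x1 y1 \<and> y1 \<noteq> u)"
      have "w \<in> {u} \<union> {z. coadj H u z}"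
      proof (rule coconn_closed[of u w])
        show "coconn u w" using coconnected au bw coadj_in_verts(2)[of H] by blast
        show "u \<in> {u} \<union> {z. coadj H u z}" by simp
        fix p q assume "p \<in> {u} \<union> {z. coadj H u z}" "coadj H p q"
        then show "q \<in> {u} \<union> {z. coadj H u z}" using nex by blast
      qed
      then show False using uw False by blast
    qed
    then obtain x1 y1 where ux: "coadj H u x1" and xy: "coadj H x1 y1" and yu: "y1 \<noteq> u" by blast
    have cx: "col x1 \<noteq> col u" "col y1 \<noteq> col x1" using col_coadj ux xy by auto
    have "a \<noteq> u" using au coadj_neq[of H] by blast
    moreover have "a \<noteq> x1" using Na xy yu by blast
    moreover have "a \<noteq> y1" "a \<noteq> b" "a \<noteq> b'" using cx cu cl by auto
    moreover have "u \<noteq> x1" using ux coadj_neq[of H] by blast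
    moreover have "u \<noteq> b" "u \<noteq> b'" using nf au by auto
    moreover have "x1 \<noteq> y1" using xy coadj_neq[of H] by blast
    moreover have "x1 \<noteq> b" "x1 \<noteq> b'" using cx cu cl by auto
    moreover have "y1 \<noteq> b" "y1 \<noteq> b'" using Nb Nb' xy ux False coadj_sym by metis+
    ultimately have dist: "distinct [a,u,x1,y1,b,b']" using yu ne by auto
    have bV: "b \<in> verts H" "b' \<in> verts H" using V by auto
    have n1: "\<not> coadj H b u" "\<not> coadj H b' u" "\<not> coadj H b y1" "\<not> coadj H b' y1"
      using same_col_not_coadj cx cu cl by metis+
    have n2: "\<not> coadj H b x1" "\<not> coadj H b' x1" using Nb Nb' ux False by auto
    have n3: "\<not> coadj H b b'" using same_col_not_coadj cl by metis
    show False
      using no_coisolated_pair_beside_two_coedges[OF au(1) xy dist] bV nf'(1) n1(1) n2(1) n1(3)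
        nf'(3) n1(2) n2(2) n1(4) n3 by simp
  qed
qed

lemma no_mutual_triple_misses:
  assumes V: "p0 \<in> verts H" "p1 \<in> verts H" "p2 \<in> verts H" "p3 \<in> verts H"
       "q0 \<in> verts H" "q1 \<in> verts H" "q2 \<in> verts H" "q3 \<in> verts H"
    and cp: "col p1 = col p0" "col p2 = col p0" "col p3 = col p0" "col q0 \<noteq> col p0"
       "col q1 = col q0" "col q2 = col q0" "col q3 = col q0"
    and dp: "distinct [p1,p2,p3]" and dq: "distinct [q1,q2,q3]"
    and m0: "\<not> coadj H q0 p1" "\<not> coadj H q0 p2" "\<not> coadj H q0 p3" "\<not> coadj H p0 q1"
      "\<not> coadj H p0 q2" "\<not> coadj H p0 q3"
  shows False
proof -
  have cross_pair: False if "a \<in> verts H" "a' \<in> verts H" "b \<in> verts H" "b' \<in> verts H"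
    "col a = col a'" "col b = col b'" "col a \<noteq> col b" "a \<noteq> a'" "b \<noteq> b'"
    "\<not> coadj H a b" "\<not> coadj H a b'" "\<not> coadj H a' b" "\<not> coadj H a' b'" for a a' b b'
    using no_cross_independent_pairs[OF that] .
  have mq: "\<And>p. p \<in> {p1,p2,p3} \<Longrightarrow> \<not> coadj H q0 p \<and> \<not> coadj H p q0 \<and> col p = col p0 \<and> p \<in> verts H"
    using m0 cp V coadj_sym by auto
  have mp: "\<And>q. q \<in> {q1,q2,q3} \<Longrightarrow> \<not> coadj H p0 q \<and> \<not> coadj H q p0 \<and> col q = col q0 \<and> q \<in> verts H"
    using m0 cp V coadj_sym by auto
  show False
  proof (cases "coadj H p0 q0")
    case True
    have p0ne: "p0 \<noteq> p1" "p0 \<noteq> p2" "p0 \<noteq> p3" using True m0 coadj_sym by metis+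
    have q0ne: "q0 \<noteq> q1" "q0 \<noteq> q2" "q0 \<noteq> q3" using True m0 coadj_sym by metis+
    have cpq: "col p0 \<noteq> col q0" using cp by auto
    have m0s: "\<not> coadj H p1 q0" "\<not> coadj H p2 q0" "\<not> coadj H p3 q0" using m0 coadj_sym by metis+
    have cross_pair_among: False if "a \<in> {p0,p1,p2,p3}" "a' \<in> {p0,p1,p2,p3}" "b \<in> {q0,q1,q2,q3}"
      "b' \<in> {q0,q1,q2,q3}"
      "a \<noteq> a'" "b \<noteq> b'"
      "\<not> coadj H a b" "\<not> coadj H a b'" "\<not> coadj H a' b" "\<not> coadj H a' b'" for a a' b b'
      apply (rule cross_pair[of a a' b b'])
      using that V cp by auto
    have p_miss: "coadj H p q \<or> coadj H p q'"
      if "p \<in> {p1, p2, p3}" "q \<in> {q1, q2, q3}" "q' \<in> {q1, q2, q3}" "q \<noteq> q'" for p q q'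
      using cross_pair_among[of p0 p q q'] that p0ne m0 by auto
    have q_miss: "coadj H p q \<or> coadj H p' q"
      if "q \<in> {q1, q2, q3}" "p \<in> {p1, p2, p3}" "p' \<in> {p1, p2, p3}" "p \<noteq> p'" for q p p'
      using cross_pair_among[of p p' q0 q] that q0ne m0s by auto
    have "distinct [p0, p1, p2, p3, q0, q1, q2, q3]" using dp dq p0ne q0ne cp by auto
    moreover have "\<forall>u\<in>{p0, p1, p2, p3}. \<forall>v\<in>{p0, p1, p2, p3}. \<not> coadj H u v"
      "\<forall>u\<in>{q0, q1, q2, q3}. \<forall>v\<in>{q0, q1, q2, q3}. \<not> coadj H u v"
      using cp by (auto intro!: same_col_not_coadj)
    ultimately show False
      using no_G5k_configuration_near_complete[of p0 p1 p2 p3 q0 q1 q2 q3, OF _ _ _ _ True _ _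
        p_miss q_miss] V m0 m0s by auto
  next
    case False
    obtain p p' where pp: "p \<in> {p1,p2,p3}" "p' \<in> {p1,p2,p3}" "p \<noteq> p'" "p \<noteq> p0" "p' \<noteq> p0"
      using dp by (cases "p0 = p1"; cases "p0 = p2") auto
    obtain q q' where qq: "q \<in> {q1,q2,q3}" "q' \<in> {q1,q2,q3}" "q \<noteq> q'" "q \<noteq> q0" "q' \<noteq> q0"
      using dq by (cases "q0 = q1"; cases "q0 = q2") auto
    have mqp: "\<not> coadj H q0 p" "\<not> coadj H p q0" "col p = col p0" "p \<in> verts H" using mq[OF pp(1)]
      by auto
    have mqp': "\<not> coadj H q0 p'" "\<not> coadj H p' q0" "col p' = col p0" "p' \<in> verts H" using mq[OF
      pp(2)] by auto
    have mpq: "\<not> coadj H p0 q" "\<not> coadj H q p0" "col q = col q0" "q \<in> verts H" using mp[OF qq(1)]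
      by auto
    have mpq': "\<not> coadj H p0 q'" "\<not> coadj H q' p0" "col q' = col q0" "q' \<in> verts H" using mp[OF
      qq(2)] by auto
    have cpq: "col p0 \<noteq> col q0" using cp by auto
    have e1: "coadj H p q"
    proof (rule ccontr)
      assume "\<not> coadj H p q"
      then show False using cross_pair[of p0 p q0 q] V mqp mpq cpq pp qq False by metis
    qed
    have e2: "coadj H p' q'"
    proof (rule ccontr)
      assume "\<not> coadj H p' q'"
      then show False using cross_pair[of p0 p' q0 q'] V mqp' mpq' cpq pp qq False by metis
    qed
    have cc: "col p \<noteq> col q" "col p \<noteq> col q'" "col p' \<noteq> col q" "col p' \<noteq> col q'"
      "col p0 \<noteq> col q" "col p0 \<noteq> col q'" "col q0 \<noteq> col p" "col q0 \<noteq> col p'"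
      using mqp mqp' mpq mpq' cpq by auto
    have dist: "distinct [p,q,p',q',p0,q0]"
      using pp qq cc cpq by (auto simp del: insert_iff)
    have n1: "\<not> coadj H p0 p" "\<not> coadj H p0 p'" "\<not> coadj H q0 q" "\<not> coadj H q0 q'"
      using same_col_not_coadj mqp mqp' mpq mpq' by metis+
    show False
      using no_coisolated_pair_beside_two_coedges[OF e1 e2 dist] V(1) V(5) n1(1) mpq(1) n1(2)
        mpq'(1) mqp(1) n1(3) mqp'(1) n1(4) False by simp
  qed
qed

definition misses_three :: "bool \<Rightarrow> 'a \<Rightarrow> bool" where
  "misses_three c b \<longleftrightarrow> (\<exists>a1 a2 a3. a1 \<in> verts H \<and> a2 \<in> verts H \<and> a3 \<in> verts H \<and> col a1 = c
    \<and> col a2 = c \<and> col a3 = c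
     \<and> a1 \<noteq> a2 \<and> a1 \<noteq> a3 \<and> a2 \<noteq> a3 \<and> \<not> coadj H b a1 \<and> \<not> coadj H b a2 \<and> \<not> coadj H b a3)"

lemma Q_partition_colour_class:
  assumes m: "\<forall>b\<in>verts H. col b \<noteq> c \<longrightarrow> \<not> misses_three c b"
  shows "Q_partition H {v \<in> verts H. col v = c}"
  unfolding Q_partition_def
proof (intro conjI ballI impI)
  show "{v \<in> verts H. col v = c} \<subseteq> verts H" by blast
next
  fix x y assume "x \<in> {v \<in> verts H. col v = c}" "y \<in> {v \<in> verts H. col v = c}"
  then show "\<not> coadj H x y" using same_col_not_coadj by auto
next
  fix x y assume "x \<in> verts H - {v \<in> verts H. col v = c}" "y \<in> verts H - {v \<in> verts H. col v = c}"
  then show "\<not> coadj H x y" using same_col_not_coadj by auto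
next
  fix b a1 a2 a3 assume b: "b \<in> verts H - {v \<in> verts H. col v = c}"
    and a: "a1 \<in> {v \<in> verts H. col v = c}" "a2 \<in> {v \<in> verts H. col v = c}"
      "a3 \<in> {v \<in> verts H. col v = c}"
    and ne: "a1 \<noteq> a2 \<and> a1 \<noteq> a3 \<and> a2 \<noteq> a3"
  show "coadj H b a1 \<or> coadj H b a2 \<or> coadj H b a3"
    using m b a ne unfolding misses_three_def by blast
next
  fix b b' a a' assume b: "b \<in> verts H - {v \<in> verts H. col v = c}"
    "b' \<in> verts H - {v \<in> verts H. col v = c}"
    and a: "a \<in> {v \<in> verts H. col v = c}" "a' \<in> {v \<in> verts H. col v = c}"
    and ne: "b \<noteq> b' \<and> a \<noteq> a'"
  show "coadj H b a \<or> coadj H b a' \<or> coadj H b' a \<or> coadj H b' a'"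
  proof (rule ccontr)
    assume "\<not> (coadj H b a \<or> coadj H b a' \<or> coadj H b' a \<or> coadj H b' a')"
    then have "\<not> coadj H a b" "\<not> coadj H a b'" "\<not> coadj H a' b" "\<not> coadj H a' b'" using coadj_sym
      by metis+
    then show False using no_cross_independent_pairs[of a a' b b'] a b ne by auto
  qed
qed

lemma Q_partition_coconnected: "\<exists>A. Q_partition H A"
proof (cases "\<forall>b\<in>verts H. col b \<noteq> True \<longrightarrow> \<not> misses_three True b")
  case T: True
  have "Q_partition H {v \<in> verts H. col v = True}" by (rule Q_partition_colour_class[OF T])
  then show ?thesis by blast
next
  case False
  then obtain q0 where q0: "q0 \<in> verts H" "\<not> col q0" "misses_three True q0" by blast
  have no_False_miss: "\<forall>b\<in>verts H. col b \<noteq> False \<longrightarrow> \<not> misses_three False b"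
  proof (intro ballI impI notI)
    fix p0 assume p0: "p0 \<in> verts H" "col p0 \<noteq> False" "misses_three False p0"
    obtain p1 p2 p3 where "p1 \<in> verts H" "p2 \<in> verts H" "p3 \<in> verts H" "col p1" "col p2" "col p3"
      "distinct [p1,p2,p3]" "\<not> coadj H q0 p1" "\<not> coadj H q0 p2" "\<not> coadj H q0 p3"
      using q0(3) unfolding misses_three_def by auto
    moreover obtain q1 q2 q3 where "q1 \<in> verts H" "q2 \<in> verts H" "q3 \<in> verts H" "\<not> col q1"
      "\<not> col q2" "\<not> col q3"
      "distinct [q1,q2,q3]" "\<not> coadj H p0 q1" "\<not> coadj H p0 q2" "\<not> coadj H p0 q3"
      using p0(3) unfolding misses_three_def by auto
    ultimately show False using no_mutual_triple_misses[of p0 p1 p2 p3 q0 q1 q2 q3] p0 q0 by auto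
  qed
  have "Q_partition H {v \<in> verts H. col v = False}" by (rule Q_partition_colour_class[OF
    no_False_miss])
  then show ?thesis by blast
qed

end

context N_free_coloured
begin

definition three_of_colour :: "'a set \<Rightarrow> bool \<Rightarrow> bool" where
  "three_of_colour C c \<longleftrightarrow> (\<exists>p1 p2 p3. p1 \<in> C \<and> p2 \<in> C \<and> p3 \<in> C \<and> col p1 = c \<and> col p2 = c \<and> col p3 = c
       \<and> p1 \<noteq> p2 \<and> p1 \<noteq> p3 \<and> p2 \<noteq> p3)"

end

locale coconnected_plus_isolated = N_free_coloured +
  fixes i0 :: 'a
  assumes i0_in_verts: "i0 \<in> verts H" and i0_isolated: "\<not> coadj H i0 z"
    and coconnected_rest: "x \<in> verts H \<Longrightarrow> y \<in> verts H \<Longrightarrow> x \<noteq> i0 \<Longrightarrow> y \<noteq> i0 \<Longrightarrow> coconn x y"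
    and has_coneighbour_rest: "x \<in> verts H \<Longrightarrow> x \<noteq> i0 \<Longrightarrow> \<exists>y. coadj H x y"
begin

lemma Q_partition_few_of_colour:
  assumes nt: "\<not> three_of_colour (verts H - {i0}) c"
  shows "Q_partition H {v \<in> verts H. v \<noteq> i0 \<and> col v = c}"
  unfolding Q_partition_def
proof (intro conjI ballI impI)
  let ?A = "{v \<in> verts H. v \<noteq> i0 \<and> col v = c}"
  show "?A \<subseteq> verts H" by blast
next
  fix x y assume "x \<in> {v \<in> verts H. v \<noteq> i0 \<and> col v = c}" "y \<in> {v \<in> verts H. v \<noteq> i0 \<and> col v = c}"
  then show "\<not> coadj H x y" using same_col_not_coadj by auto
next
  fix x y assume x: "x \<in> verts H - {v \<in> verts H. v \<noteq> i0 \<and> col v = c}"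
    and y: "y \<in> verts H - {v \<in> verts H. v \<noteq> i0 \<and> col v = c}"
  show "\<not> coadj H x y"
  proof (cases "x = i0 \<or> y = i0")
    case True then show ?thesis using i0_isolated coadj_sym by metis
  next
    case False then show ?thesis using x y same_col_not_coadj by auto
  qed
next
  fix b a1 a2 a3 assume "a1 \<in> {v \<in> verts H. v \<noteq> i0 \<and> col v = c}"
    "a2 \<in> {v \<in> verts H. v \<noteq> i0 \<and> col v = c}"
    "a3 \<in> {v \<in> verts H. v \<noteq> i0 \<and> col v = c}" "a1 \<noteq> a2 \<and> a1 \<noteq> a3 \<and> a2 \<noteq> a3"
  then have "three_of_colour (verts H - {i0}) c" unfolding three_of_colour_def by blast
  then show "coadj H b a1 \<or> coadj H b a2 \<or> coadj H b a3" using nt by blast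
next
  fix b b' a a' assume b: "b \<in> verts H - {v \<in> verts H. v \<noteq> i0 \<and> col v = c}"
    "b' \<in> verts H - {v \<in> verts H. v \<noteq> i0 \<and> col v = c}"
    and a: "a \<in> {v \<in> verts H. v \<noteq> i0 \<and> col v = c}" "a' \<in> {v \<in> verts H. v \<noteq> i0 \<and> col v = c}"
    and ne: "b \<noteq> b' \<and> a \<noteq> a'"
  show "coadj H b a \<or> coadj H b a' \<or> coadj H b' a \<or> coadj H b' a'"
  proof (rule ccontr)
    assume nf: "\<not> (coadj H b a \<or> coadj H b a' \<or> coadj H b' a \<or> coadj H b' a')"
    obtain x where x: "x \<in> {b, b'}" "x \<noteq> i0" using ne by blast
    have xV: "x \<in> verts H" "col x \<noteq> c" using x b by auto
    obtain t where t: "coadj H x t" using has_coneighbour_rest xV x by blast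
    have tV: "t \<in> verts H" "t \<noteq> i0" using t coadj_in_verts(2)[of H] i0_isolated coadj_sym by metis+
    have ct: "col t = c" using col_coadj[OF t] xV by auto
    have "t \<noteq> a" "t \<noteq> a'" using t nf x by auto
    then have "three_of_colour (verts H - {i0}) c" unfolding three_of_colour_def using a ne tV ct
      by blast
    then show False using nt by blast
  qed
qed

lemma no_two_coedges_beside:
  assumes e1: "coadj H a b" and e2: "coadj H c d" and dd: "distinct [a, b, c, d]"
    and z: "z \<in> verts H" "z \<noteq> i0" "z \<notin> {a, b, c, d}"
    and n: "\<not> coadj H z a" "\<not> coadj H z b" "\<not> coadj H z c" "\<not> coadj H z d"
  shows False
proof -
  have i0n: "\<not> coadj H z i0" for z using i0_isolated coadj_sym by metis
  have "i0 \<notin> {a, b, c, d}" using e1 e2 i0_isolated i0n by auto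
  then have dist: "distinct [a, b, c, d, z, i0]" using dd z by auto
  show False
    using no_coisolated_pair_beside_two_coedges[OF e1 e2 dist] z i0_in_verts n i0_isolated i0n
    by simp
qed

text \<open>Both \<open>p\<^sub>i\<close> then have the same unique coneighbour \<open>w\<close>, and no co-path leads from \<open>w\<close>
  to \<open>q\<close>.\<close>

lemma no_double_miss:
  assumes qV: "q \<in> verts H" "q \<noteq> i0" and pV: "p1 \<in> verts H" "p1 \<noteq> i0" "p2 \<in> verts H" "p2 \<noteq> i0"
    and cp: "col p1 = col p2" "col p1 \<noteq> col q" and pne: "p1 \<noteq> p2"
    and m: "\<not> coadj H q p1" "\<not> coadj H q p2"
    and three_q: "three_of_colour (verts H - {i0}) (col q)"
  shows False
proof -
  have i0n: "\<not> coadj H z i0" for z using i0_isolated coadj_sym by metis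
  have cq: "col p2 \<noteq> col q" using cp by auto
  have p_coneighbours_eq: "x = y" if "coadj H p1 x" "coadj H p2 y" for x y
  proof (rule ccontr)
    assume xy: "x \<noteq> y"
    have cx: "col x = col q" "col y = col q" using col_coadj that cp by auto
    have "p1 \<noteq> x" "p2 \<noteq> y" using that coadj_neq[of H] by auto
    moreover have "p1 \<noteq> y" "x \<noteq> p2" using cx cp by auto
    ultimately have dd: "distinct [p1,x,p2,y]" using pne xy by auto
    have "q \<noteq> p1" "q \<noteq> p2" using cp by auto
    moreover have "q \<noteq> x" "q \<noteq> y" using m that coadj_sym by metis+
    moreover have "\<not> coadj H q x" "\<not> coadj H q y" using same_col_not_coadj cx by metis+
    ultimately show False using no_two_coedges_beside[OF that(1) that(2) dd qV(1) qV(2)] m by auto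
  qed
  obtain w where w1: "coadj H p1 w" using has_coneighbour_rest pV by blast
  have Np1: "\<forall>z. coadj H p1 z \<longleftrightarrow> z = w"
  proof -
    obtain w' where "coadj H p2 w'" using has_coneighbour_rest pV by blast
    then show ?thesis using p_coneighbours_eq w1 by metis
  qed
  have Np2: "\<forall>z. coadj H p2 z \<longleftrightarrow> z = w"
    using p_coneighbours_eq w1 has_coneighbour_rest pV by metis
  have cw: "col w = col q" using col_coadj w1 cp by auto
  have wV: "w \<in> verts H" "w \<noteq> i0" using w1 coadj_in_verts(2)[of H] i0n by metis+
  have qw: "q \<noteq> w" using w1 m coadj_sym by metis
  have wp1: "coadj H w p1" "coadj H w p2" using Np1 Np2 coadj_sym by metis+
  obtain q3 where q3: "q3 \<in> verts H" "q3 \<noteq> i0" "col q3 = col q" "q3 \<noteq> q" "q3 \<noteq> w"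
  proof -
    obtain s1 s2 s3 where "s1 \<in> verts H - {i0}" "s2 \<in> verts H - {i0}" "s3 \<in> verts H - {i0}"
      "col s1 = col q" "col s2 = col q" "col s3 = col q" "s1 \<noteq> s2" "s1 \<noteq> s3" "s2 \<noteq> s3"
      using three_q unfolding three_of_colour_def by blast
    then show ?thesis using that by (metis Diff_iff insertI1)
  qed
  have q3p: "\<not> coadj H q3 p1" "\<not> coadj H q3 p2" using Np1 Np2 q3 coadj_sym by metis+
  have q3_coadj_coneighbours_of_q: "coadj H q3 r" if qr: "coadj H q r" for r
  proof (rule ccontr)
    assume nr: "\<not> coadj H q3 r"
    have cr: "col r = col p1" using col_coadj qr cp by auto
    have "p1 \<noteq> w" using w1 coadj_neq[of H] by blast
    moreover have "p1 \<noteq> r" using qr m by blast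
    moreover have "p1 \<noteq> q" "w \<noteq> r" using cp cr cw by auto
    moreover have "r \<noteq> q" using qr coadj_neq[of H] by blast
    ultimately have dd: "distinct [p1,w,r,q]" using qw by auto
    have "q3 \<noteq> p1" "q3 \<noteq> r" using q3 cp cr by auto
    moreover have "\<not> coadj H q3 w" "\<not> coadj H q3 q" using same_col_not_coadj q3 cw by metis+
    ultimately show False
      using no_two_coedges_beside[OF w1 coadj_sym[THEN iffD1, OF qr] dd q3(1) q3(2)] q3 q3p nr
        by auto
  qed
  have w_not_coadj_coneighbours_of_q: "\<not> coadj H w r" if qr: "coadj H q r" for r
  proof
    assume wr: "coadj H w r"
    have cr: "col r = col p1" using col_coadj qr cp by auto
    have rV: "r \<in> verts H" "q3 \<in> verts H" using qr coadj_in_verts(2)[of H] q3 by auto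
    have "q \<noteq> p1" "q \<noteq> p2" "q3 \<noteq> p1" "q3 \<noteq> p2" "r \<noteq> w" using cp cr cw q3 by auto
    moreover have "q \<noteq> r" "q3 \<noteq> r" "p1 \<noteq> w" "p2 \<noteq> w" using qr q3_coadj_coneighbours_of_q[OF qr] w1
      wp1 coadj_neq[of H] by auto
    moreover have "p1 \<noteq> r" "p2 \<noteq> r" using qr m by auto
    ultimately have dist: "distinct [q,p1,p2,q3,r,w]" using pne q3 qw by auto
    have rw: "coadj H r w" "coadj H r q" "coadj H r q3" using wr qr q3_coadj_coneighbours_of_q[OF
      qr] coadj_sym by metis+
    have n1: "\<not> coadj H q q3" "\<not> coadj H q w" "\<not> coadj H p1 p2" "\<not> coadj H q3 w"
      using same_col_not_coadj q3 cw cp by metis+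
    have n2: "\<not> coadj H p1 r" "\<not> coadj H p2 r" using same_col_not_coadj cr cp by metis+
    have n3: "\<not> coadj H p1 q3" "\<not> coadj H p2 q3" using q3p coadj_sym by metis+
    show False
      using no_G4_configuration[of q p1 p2 q3 r w] qV pV rV wV dist rw wp1 m n1 n2 n3
      by (simp add: coadj_irrefl[of H] coadj_sym)
  qed
  have q_coadj_coneighbours_of_mates: "coadj H q t" if sV: "s \<in> verts H" "s \<noteq> i0" "col s = col q"
    "s \<noteq> q" "s \<noteq> w" and st: "coadj H s t" for s t
  proof (rule ccontr)
    assume nqt: "\<not> coadj H q t"
    have ct: "col t = col p1" using col_coadj st sV cp by auto
    have "p1 \<noteq> w" using w1 coadj_neq[of H] by blast
    moreover have "p1 \<noteq> t" using st Np1 sV coadj_sym by metis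
    moreover have "p1 \<noteq> s" "w \<noteq> t" using cp sV ct cw by auto
    moreover have "t \<noteq> s" using st coadj_neq[of H] by blast
    ultimately have dd: "distinct [p1,w,t,s]" using sV by auto
    have "q \<noteq> p1" "q \<noteq> t" using cp ct by auto
    moreover have "\<not> coadj H q w" "\<not> coadj H q s" using same_col_not_coadj sV cw by metis+
    ultimately show False
      using no_two_coedges_beside[OF w1 coadj_sym[THEN iffD1, OF st] dd qV] qw sV m nqt by auto
  qed
  have "q \<in> {w} \<union> {z. coadj H w z}"
  proof (rule coconn_closed[of w q])
    show "coconn w q" using coconnected_rest wV qV by blast
    show "w \<in> {w} \<union> {z. coadj H w z}" by simp
    fix v z assume v: "v \<in> {w} \<union> {z. coadj H w z}" and vz: "coadj H v z"
    show "z \<in> {w} \<union> {z. coadj H w z}"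
    proof (cases "v = w")
      case True then show ?thesis using vz by simp
    next
      case False
      then have wv: "coadj H w v" using v by simp
      have cv: "col v \<noteq> col w" "col z \<noteq> col v" using col_coadj wv vz by auto
      have cz: "col z = col q" using cv cw by auto
      have zV: "z \<in> verts H" "z \<noteq> i0" using vz coadj_in_verts(2)[of H] i0n by metis+
      have vz': "coadj H z v" using vz coadj_sym by metis
      show ?thesis
      proof (cases "z = w")
        case True then show ?thesis by simp
      next
        case zw: False
        show ?thesis
        proof (cases "z = q")
          case True then show ?thesis using w_not_coadj_coneighbours_of_q vz' wv by blast
        next
          case False
          then have "coadj H q v" using q_coadj_coneighbours_of_mates[OF zV cz False zw vz']
            by blast
          then show ?thesis using w_not_coadj_coneighbours_of_q wv by blast
        qed
      qed
    qed
  qed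
  then show False using qw same_col_not_coadj cw by auto
qed

lemma Q_partition_exists:
  shows "\<exists>A. Q_partition H A"
proof (cases "three_of_colour (verts H - {i0}) True")
  case False then show ?thesis using Q_partition_few_of_colour[OF False] by blast
next
  case three_True: True
  show ?thesis
  proof (cases "three_of_colour (verts H - {i0}) False")
    case False then show ?thesis using Q_partition_few_of_colour[OF False] by blast
  next
    case three_False: True
    have three_q: "three_of_colour (verts H - {i0}) (col q)" for q using three_True three_False
      by (cases "col q") auto
    have double_miss: False if "q \<in> verts H" "q \<noteq> i0" "p1 \<in> verts H" "p1 \<noteq> i0" "p2 \<in> verts H"
      "p2 \<noteq> i0"
      "col p1 = col p2" "col p1 \<noteq> col q" "p1 \<noteq> p2" "\<not> coadj H q p1" "\<not> coadj H q p2" for q p1 p2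
      using no_double_miss[OF that three_q] .
    have i0n: "\<not> coadj H z i0" for z using i0_isolated coadj_sym by metis
    let ?A = "{v \<in> verts H. v \<noteq> i0 \<and> col v} \<union> {i0}"
    have "Q_partition H ?A"
      unfolding Q_partition_def
    proof (intro conjI ballI impI)
      show "?A \<subseteq> verts H" using i0_in_verts by blast
    next
      fix x y assume "x \<in> ?A" "y \<in> ?A" then show "\<not> coadj H x y" using same_col_not_coadj
        i0_isolated i0n by auto
    next
      fix x y assume "x \<in> verts H - ?A" "y \<in> verts H - ?A" then show "\<not> coadj H x y"
        using same_col_not_coadj by auto
    next
      fix b a1 a2 a3 assume b: "b \<in> verts H - ?A" and a: "a1 \<in> ?A" "a2 \<in> ?A" "a3 \<in> ?A"
        and ne: "a1 \<noteq> a2 \<and> a1 \<noteq> a3 \<and> a2 \<noteq> a3"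
      show "coadj H b a1 \<or> coadj H b a2 \<or> coadj H b a3"
      proof (rule ccontr)
        assume nf: "\<not> (coadj H b a1 \<or> coadj H b a2 \<or> coadj H b a3)"
        have bb: "b \<in> verts H" "b \<noteq> i0" "\<not> col b" using b i0_in_verts by auto
        obtain x y where "x \<in> {a1,a2,a3}" "y \<in> {a1,a2,a3}" "x \<noteq> y" "x \<noteq> i0" "y \<noteq> i0"
          using ne by (cases "a1 = i0"; cases "a2 = i0") auto
        then show False using double_miss[of b x y] a bb nf by auto
      qed
    next
      fix b b' a a' assume b: "b \<in> verts H - ?A" "b' \<in> verts H - ?A" and a: "a \<in> ?A" "a' \<in> ?A"
        and ne: "b \<noteq> b' \<and> a \<noteq> a'"
      show "coadj H b a \<or> coadj H b a' \<or> coadj H b' a \<or> coadj H b' a'"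
      proof (rule ccontr)
        assume nf: "\<not> (coadj H b a \<or> coadj H b a' \<or> coadj H b' a \<or> coadj H b' a')"
        have bb: "b \<in> verts H" "b \<noteq> i0" "\<not> col b" "b' \<in> verts H" "b' \<noteq> i0" "\<not> col b'" using b
          i0_in_verts by auto
        obtain x where x: "x \<in> {a, a'}" "x \<noteq> i0" using ne by blast
        have xx: "x \<in> verts H" "col x" using x a by auto
        have "\<not> coadj H x b" "\<not> coadj H x b'" using nf x coadj_sym by auto
        then show False using double_miss[of x b b'] xx x bb ne by auto
      qed
    qed
    then show ?thesis by blast
  qed
qed

end

locale isolated_coedge = N_free_coloured +
  fixes d1 d2 :: 'a
  assumes d_coadj: "coadj H d1 d2"
    and d1_only: "coadj H d1 z \<Longrightarrow> z = d2" and d2_only: "coadj H d2 z \<Longrightarrow> z = d1"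
    and has_coneighbour_rest: "x \<in> verts H \<Longrightarrow> x \<noteq> d1 \<Longrightarrow> x \<noteq> d2 \<Longrightarrow> \<exists>y. coadj H x y"
begin

lemma d_in_verts: "d1 \<in> verts H" "d2 \<in> verts H"
  using coadj_in_verts[OF d_coadj] by simp_all

lemma no_double_miss:
  assumes qV: "q \<in> verts H" "q \<noteq> d1" "q \<noteq> d2"
    and pV: "p1 \<in> verts H" "p1 \<noteq> d1" "p1 \<noteq> d2" "p2 \<in> verts H" "p2 \<noteq> d1" "p2 \<noteq> d2"
    and cp: "col p1 = col p2" "col p1 \<noteq> col q" and pne: "p1 \<noteq> p2"
    and m: "\<not> coadj H q p1" "\<not> coadj H q p2"
  shows False
proof -
  obtain p where qp: "coadj H q p" using has_coneighbour_rest qV by blast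
  have cpp: "col p = col p1" using col_coadj qp cp by auto
  have "p \<noteq> d1" using qp d1_only d2_only qV coadj_sym by metis
  moreover have "p \<noteq> d2" using qp d1_only d2_only qV coadj_sym by metis
  moreover have "q \<noteq> p" using qp coadj_neq[of H] by blast
  moreover have "q \<noteq> p1" "q \<noteq> p2" using cp by auto
  moreover have "p \<noteq> p1" "p \<noteq> p2" using qp m by auto
  moreover have "d1 \<noteq> d2" using d_coadj coadj_neq[of H] by blast
  ultimately have dist: "distinct [q,p,d1,d2,p1,p2]" using qV pV pne by auto
  have n1: "\<not> coadj H p1 q" "\<not> coadj H p2 q" using m coadj_sym by metis+
  have n2: "\<not> coadj H p1 p" "\<not> coadj H p2 p" "\<not> coadj H p1 p2" using same_col_not_coadj cpp cp
    by metis+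
  have n3: "\<not> coadj H p1 d1" "\<not> coadj H p1 d2" "\<not> coadj H p2 d1" "\<not> coadj H p2 d2" using d1_only
    d2_only pV coadj_sym by metis+
  show False using no_coisolated_pair_beside_two_coedges[OF qp d_coadj dist] pV(1) pV(4) n1(1) n2(1)
    n3(1) n3(2) n1(2) n2(2) n3(3) n3(4) n2(3) by simp
qed

lemma Q_partition_few_of_colour:
  assumes nt: "\<not> three_of_colour (verts H - {d1, d2}) c"
  shows "\<exists>A. Q_partition H A"
proof -
  have dne: "d1 \<noteq> d2" using d_coadj coadj_neq[of H] by blast
  have d21: "coadj H d2 d1" using d_coadj coadj_sym by metis
  have n1: "\<not> coadj H d1 z" if "z \<noteq> d2" for z using d1_only that by blast
  have n2: "\<not> coadj H d2 z" if "z \<noteq> d1" for z using d2_only that by blast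
  have n1': "\<not> coadj H z d1" if "z \<noteq> d2" for z using n1 that coadj_sym by metis
  have n2': "\<not> coadj H z d2" if "z \<noteq> d1" for z using n2 that coadj_sym by metis
  let ?C = "verts H - {d1, d2}"
  let ?A = "{v \<in> ?C. col v = c} \<union> {d1}"
  have "Q_partition H ?A"
    unfolding Q_partition_def
  proof (intro conjI ballI impI)
    show "?A \<subseteq> verts H" using d_in_verts by blast
  next
    fix x y assume "x \<in> ?A" "y \<in> ?A" then show "\<not> coadj H x y" using same_col_not_coadj n1 n1' dne
      by auto
  next
    fix x y assume "x \<in> verts H - ?A" "y \<in> verts H - ?A" then show "\<not> coadj H x y"
      using same_col_not_coadj n2 n2' dne by auto
  next
    fix b a1 a2 a3 assume b: "b \<in> verts H - ?A" and a: "a1 \<in> ?A" "a2 \<in> ?A" "a3 \<in> ?A"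
      and ne: "a1 \<noteq> a2 \<and> a1 \<noteq> a3 \<and> a2 \<noteq> a3"
    show "coadj H b a1 \<or> coadj H b a2 \<or> coadj H b a3"
    proof (rule ccontr)
      assume nf: "\<not> (coadj H b a1 \<or> coadj H b a2 \<or> coadj H b a3)"
      show False
      proof (cases "b = d2")
        case True
        then have "a1 \<noteq> d1" "a2 \<noteq> d1" "a3 \<noteq> d1" using nf d21 by auto
        then have "three_of_colour ?C c" using a ne unfolding three_of_colour_def by auto
        then show False using nt by blast
      next
        case False
        have bb: "b \<in> verts H" "b \<noteq> d1" "b \<noteq> d2" "col b \<noteq> c" using b False by auto
        obtain x y where "x \<in> {a1,a2,a3}" "y \<in> {a1,a2,a3}" "x \<noteq> y" "x \<noteq> d1" "y \<noteq> d1"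
          using ne by (cases "a1 = d1"; cases "a2 = d1") auto
        then show False using no_double_miss[of b x y] a bb nf by auto
      qed
    qed
  next
    fix b b' a a' assume b: "b \<in> verts H - ?A" "b' \<in> verts H - ?A" and a: "a \<in> ?A" "a' \<in> ?A"
      and ne: "b \<noteq> b' \<and> a \<noteq> a'"
    show "coadj H b a \<or> coadj H b a' \<or> coadj H b' a \<or> coadj H b' a'"
    proof (rule ccontr)
      assume nf: "\<not> (coadj H b a \<or> coadj H b a' \<or> coadj H b' a \<or> coadj H b' a')"
      show False
      proof (cases "b = d2 \<or> b' = d2")
        case True
        then obtain y where y: "y \<in> {b, b'}" "y \<noteq> d2" using ne by blast
        have "a \<noteq> d1" "a' \<noteq> d1" using True nf d21 by auto
        then have aa: "a \<in> ?C" "col a = c" "a' \<in> ?C" "col a' = c" using a by auto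
        have yy: "y \<in> verts H" "y \<noteq> d1" "y \<noteq> d2" "col y \<noteq> c" using y b by auto
        have "\<not> coadj H y a" "\<not> coadj H y a'" using y nf by auto
        then show False using no_double_miss[of y a a'] aa yy ne by auto
      next
        case False
        have bb: "b \<in> verts H" "b \<noteq> d1" "b \<noteq> d2" "col b \<noteq> c" "b' \<in> verts H" "b' \<noteq> d1" "b' \<noteq> d2"
          "col b' \<noteq> c"
          using b False by auto
        obtain x where x: "x \<in> {a, a'}" "x \<noteq> d1" using ne by blast
        have xx: "x \<in> verts H" "col x = c" "x \<noteq> d2" using x a by auto
        have "\<not> coadj H x b" "\<not> coadj H x b'" using nf x coadj_sym by auto
        then show False using no_double_miss[of x b b'] xx x bb ne by auto
      qed
    qed
  qed
  then show ?thesis by blast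
qed

lemma Q_partition_exists:
  shows "\<exists>A. Q_partition H A"
proof (cases "three_of_colour (verts H - {d1, d2}) True")
  case False then show ?thesis using Q_partition_few_of_colour[OF False] by blast
next
  case three_True: True
  show ?thesis
  proof (cases "three_of_colour (verts H - {d1, d2}) False")
    case False then show ?thesis using Q_partition_few_of_colour[OF False] by blast
  next
    case three_False: True
    obtain p1 p2 p3 where P: "p1 \<in> verts H" "p1 \<noteq> d1" "p1 \<noteq> d2" "p2 \<in> verts H" "p2 \<noteq> d1" "p2 \<noteq> d2"
      "p3 \<in> verts H" "p3 \<noteq> d1" "p3 \<noteq> d2" "col p1" "col p2" "col p3" "p1 \<noteq> p2" "p1 \<noteq> p3" "p2 \<noteq> p3"
      using three_True unfolding three_of_colour_def by auto
    obtain q1 q2 q3 where Q: "q1 \<in> verts H" "q1 \<noteq> d1" "q1 \<noteq> d2" "q2 \<in> verts H" "q2 \<noteq> d1" "q2 \<noteq> d2"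
      "q3 \<in> verts H" "q3 \<noteq> d1" "q3 \<noteq> d2" "\<not> col q1" "\<not> col q2" "\<not> col q3" "q1 \<noteq> q2" "q1 \<noteq> q3"
        "q2 \<noteq> q3"
      using three_False unfolding three_of_colour_def by auto
    note PQ = P Q
    have p_miss: "coadj H p q \<or> coadj H p q'"
      if "p \<in> {p1, p2, p3}" "q \<in> {q1, q2, q3}" "q' \<in> {q1, q2, q3}" "q \<noteq> q'" for p q q'
      using no_double_miss[of p q q'] that P Q coadj_sym by auto
    have q_miss: "coadj H p q \<or> coadj H p' q"
      if "q \<in> {q1, q2, q3}" "p \<in> {p1, p2, p3}" "p' \<in> {p1, p2, p3}" "p \<noteq> p'" for q p p'
      using no_double_miss[of q p p'] that P Q coadj_sym by auto
    have dne: "d1 \<noteq> d2" using d_coadj coadj_neq[of H] by blast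
    have "distinct [d1, p1, p2, p3, d2, q1, q2, q3]" using P Q dne by auto
    moreover have "\<forall>u\<in>{d1, p1, p2, p3}. \<forall>v\<in>{d1, p1, p2, p3}. \<not> coadj H u v"
    proof -
      have "\<not> coadj H u v" if "u \<in> {p1, p2, p3}" "v \<in> {p1, p2, p3}" for u v
        using that P by (auto intro!: same_col_not_coadj)
      moreover have "\<not> coadj H d1 u" "\<not> coadj H u d1" if "u \<in> {d1, p1, p2, p3}" for u
        using that P d1_only coadj_sym coadj_irrefl[of H] by auto
      ultimately show ?thesis by blast
    qed
    moreover have "\<forall>u\<in>{d2, q1, q2, q3}. \<forall>v\<in>{d2, q1, q2, q3}. \<not> coadj H u v"
    proof -
      have "\<not> coadj H u v" if "u \<in> {q1, q2, q3}" "v \<in> {q1, q2, q3}" for u v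
        using that Q by (auto intro!: same_col_not_coadj)
      moreover have "\<not> coadj H d2 u" "\<not> coadj H u d2" if "u \<in> {d2, q1, q2, q3}" for u
        using that Q d2_only coadj_sym coadj_irrefl[of H] by auto
      ultimately show ?thesis by blast
    qed
    moreover have "\<forall>q\<in>{q1, q2, q3}. \<not> coadj H d1 q" "\<forall>p\<in>{p1, p2, p3}. \<not> coadj H d2 p"
      using P Q d1_only d2_only by auto
    ultimately show ?thesis
      using no_G5k_configuration_near_complete[of d1 p1 p2 p3 d2 q1 q2 q3, OF _ _ _ _ d_coadj _ _
        p_miss q_miss] d_in_verts P Q by auto
  qed
qed

end

context N_free_coloured
begin

lemma coadj_outside_large_cocomponent:
  assumes e1: "coadj H x1 y1" and e2: "coadj H x2 y2" and d: "distinct [x1, y1, x2, y2]"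
    and cx: "coconn x1 x2"
    and z: "z \<in> verts H" "z' \<in> verts H" "\<not> coconn x1 z" "\<not> coconn x1 z'" "z \<noteq> z'"
  shows "coadj H z z'"
proof (rule ccontr)
  assume nzz: "\<not> coadj H z z'"
  have sep: "\<not> coadj H u t \<and> u \<noteq> t" if "t \<in> {x1, y1, x2, y2}" "\<not> coconn x1 u" for u t
  proof -
    have "coconn x1 t" using that(1) e1 e2 cx by auto
    then show ?thesis using that(2) coadj_sym by (metis coconn_trans coconn_edge)
  qed
  have "\<forall>t\<in>{x1, y1, x2, y2}. \<not> coadj H z t \<and> z \<noteq> t" "\<forall>t\<in>{x1, y1, x2, y2}. \<not> coadj H z' t \<and> z' \<noteq> t"
    using sep z(3,4) by blast+
  moreover from this have dist: "distinct [x1, y1, x2, y2, z, z']" using d z(5) by auto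
  ultimately show False
    using no_coisolated_pair_beside_two_coedges[OF e1 e2 dist] z(1,2) nzz by simp
qed

lemma Q_partition_if_large_cocomponent:
  assumes e1: "coadj H x1 y1" and e2: "coadj H x2 y2" and d: "distinct [x1,y1,x2,y2]" and cx:
    "coconn x1 x2"
  shows "\<exists>A. Q_partition H A"
proof -
  have nbrC: "\<exists>w. coadj H z w" if "coconn x1 z" for z
    using that
  proof (cases rule: rtranclp.cases)
    case rtrancl_refl then show ?thesis using e1 by blast
  next
    case (rtrancl_into_rtrancl b) then show ?thesis using coadj_sym by metis
  qed
  have connC: "coconn a b" if "coconn x1 a" "coconn x1 b" for a b using that coconn_sym coconn_trans
    by metis
  show ?thesis
  proof (cases "\<forall>z\<in>verts H. coconn x1 z")
    case True
    interpret coconnected H col using True connC nbrC by unfold_locales blast+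
    show ?thesis by (rule Q_partition_coconnected)
  next
    case False
    then obtain i0 where i0: "i0 \<in> verts H" "\<not> coconn x1 i0" by blast
    show ?thesis
    proof (cases "\<forall>z\<in>verts H. \<not> coconn x1 z \<longrightarrow> z = i0")
      case True
      have iso: "\<not> coadj H i0 z" for z
      proof
        assume iz: "coadj H i0 z"
        then have "z \<in> verts H" using coadj_in_verts(2)[of H] by blast
        moreover have "\<not> coconn x1 z" using iz i0 coadj_sym coconn_trans coconn_edge by metis
        ultimately have "z = i0" using True by blast
        then show False using iz coadj_irrefl[of H] by simp
      qed
      interpret coconnected_plus_isolated H col i0
        using i0(1) iso True connC nbrC by unfold_locales blast+
      show ?thesis by (rule Q_partition_exists)
    next
      case False
      then obtain dd where dd: "dd \<in> verts H" "\<not> coconn x1 dd" "dd \<noteq> i0" by blast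
      note outside = coadj_outside_large_cocomponent[OF e1 e2 d cx]
      have d12: "coadj H i0 dd" using outside i0 dd by blast
      have only: "z = i0 \<or> z = dd" if "z \<in> verts H" "\<not> coconn x1 z" for z
      proof (rule ccontr)
        assume "\<not> (z = i0 \<or> z = dd)"
        then have "coadj H z i0" "coadj H z dd" using outside that i0 dd by auto
        then show False using no_coadj_triangle[OF d12] coadj_sym by metis
      qed
      have N1: "z = dd" if "coadj H i0 z" for z
      proof -
        have "z \<in> verts H" using that coadj_in_verts(2)[of H] by blast
        moreover have "\<not> coconn x1 z" using that i0 coadj_sym coconn_trans coconn_edge by metis
        ultimately show ?thesis using only that coadj_irrefl[of H] by blast
      qed
      have N2: "z = i0" if "coadj H dd z" for z
      proof -
        have "z \<in> verts H" using that coadj_in_verts(2)[of H] by blast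
        moreover have "\<not> coconn x1 z" using that dd coadj_sym coconn_trans coconn_edge by metis
        ultimately show ?thesis using only that coadj_irrefl[of H] by blast
      qed
      interpret isolated_coedge H col i0 dd
        using d12 N1 N2 only nbrC by unfold_locales blast+
      show ?thesis by (rule Q_partition_exists)
    qed
  qed
qed

lemma Q_partition_from_colouring: "\<exists>A. Q_partition H A"
proof (cases "\<exists>x1 y1 x2 y2. coadj H x1 y1 \<and> coadj H x2 y2 \<and> distinct [x1,y1,x2,y2] \<and> coconn x1 x2")
  case True then show ?thesis using Q_partition_if_large_cocomponent by blast
next
  case False then show ?thesis using Q_partition_if_star_cocomponents by blast
qed

end

lemma (in N_free) Q_partition_exists: "\<exists>A. Q_partition H A"
proof -
  obtain col :: "'a \<Rightarrow> bool" where "\<forall>x y. coadj H x y \<longrightarrow> col x \<noteq> col y"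
    using coadj_bipartite by blast
  then interpret N_free_coloured H col by unfold_locales blast
  show ?thesis by (rule Q_partition_from_colouring)
qed

theorem lemma4p3:
  fixes H :: "'a graph"
  assumes "simple_graph H"
  shows "in_Qstar H \<longleftrightarrow> Free N_graphs H"
proof
  assume "in_Qstar H"
  then obtain A where "Q_partition H A" using in_Qstar_imp_Q_partition by blast
  then show "Free N_graphs H" by (rule Q_partition_imp_Free)
next
  assume "Free N_graphs H"
  then interpret N_free H using assms by unfold_locales
  obtain A where "Q_partition H A" using Q_partition_exists by blast
  then show "in_Qstar H" by (rule Q_partition_imp_in_Qstar[OF assms])
qed

end
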